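(* The number of $M$-equivalence classes of vertices of $\mathcal H$ (i.e. the maximal number of pairwise $M$-distinct vertices of $\mathcal H$) is exactly $5\cdot 4^{n-1}-2^{n+2}+4$, which equals the number of admissible signatures $|S|$.
   Context: Let $n\ge 1$, $[n]=\{0,\dots,n-1\}$, and real numbers $\gamma_0<\dots<\gamma_{n-1}$. For $\mathbf v=(v_{ydz})_{y\in[n],d,z\in\{0,1\}}\in\mathbb R^{4n}$ define $(M\mathbf v)_{(i,j,d_0,d_1)}=\sum_{z:d_z=0}v_{i0z}+\sum_{z:d_z=1}v_{j1z}$ for $i,j\in[n]$, $(d_0,d_1)\in\{0,1\}^2$, and $c_{(i,j,d_0,d_1)}=\gamma_j-\gamma_i$; $\mathcal H=\{\mathbf v:M\mathbf v\le\mathbf c\}$. Vectors $\mathbf v_1,\mathbf v_2$ are $M$-equivalent if $M\mathbf v_1=M\mathbf v_2$, $M$-distinct otherwise. $\mathbf v\in\mathcal H$ is a vertex if any representation $\mathbf v=\lambda\mathbf v_1+(1-\lambda)\mathbf v_2$, $\lambda\in(0,1)$, $\mathbf v_1,\mathbf v_2\in\mathcal H$, forces $M\mathbf v_1=M\mathbf v_2=M\mathbf v$. $S=S_1\cup S_2\cup S_3\subseteq\{0,1\}^{n\times2\times2}$, where: $\mathbf B\in S_1$ iff some $t\in\{0,\dots,n-2\}$ has $B_{i00}=B_{i01}=1$ for $i\ge t$ and $B_{i00}\ne B_{i01}$ for $i<t$, $B_{i10}\ne B_{i11}$ for all $i$, and some $i,j$ have $B_{i10}=B_{j11}=1$; $\mathbf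 B\in S_2$ iff $B_{(n-1)00}=B_{(n-1)01}=B_{010}=B_{011}=1$, $B_{i00}\ne B_{i01}$ for $i<n-1$, $B_{j10}\ne B_{j11}$ for $j>0$; $\mathbf B\in S_3$ iff some $t\in\{1,\dots,n-1\}$ has $B_{i10}=B_{i11}=1$ for $i\le t$ and $B_{i10}\ne B_{i11}$ for $i>t$, $B_{i00}\ne B_{i01}$ for all $i$, and some $i,j$ have $B_{i00}=B_{j01}=1$. *)

theory Defs
  imports Complex_Main
begin

text \<open>Encoding: a vector v in R^{4n} is a function v y d z with y < n and
 d, z :: bool (False = 0, True = 1).  Only entries with y < n are meaningful.\<close>

definition Mrow :: "(nat \<Rightarrow> bool \<Rightarrow> bool \<Rightarrow> real) \<Rightarrow> nat \<Rightarrow> nat \<Rightarrow> bool \<Rightarrow> bool \<Rightarrow> real" where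
  "Mrow v i j d0 d1 =
     (if d0 then v j True False else v i False False) +
     (if d1 then v j True True else v i False True)"

definition Mvec :: "nat \<Rightarrow> (nat \<Rightarrow> bool \<Rightarrow> bool \<Rightarrow> real) \<Rightarrow> (nat \<times> nat \<times> bool \<times> bool \<Rightarrow> real)" where
  "Mvec n v = (\<lambda>(i, j, d0, d1). if i < n \<and> j < n then Mrow v i j d0 d1 else 0)"

definition Hpoly :: "nat \<Rightarrow> (nat \<Rightarrow> real) \<Rightarrow> (nat \<Rightarrow> bool \<Rightarrow> bool \<Rightarrow> real) set" where
  "Hpoly n \<gamma> = {v. \<forall>i<n. \<forall>j<n. \<forall>d0 d1. Mrow v i j d0 d1 \<le> \<gamma> j - \<gamma> i}"

definition is_vertex :: "nat \<Rightarrow> (nat \<Rightarrow> real) \<Rightarrow> (nat \<Rightarrow> bool \<Rightarrow> bool \<Rightarrow> real) \<Rightarrow> bool" where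
  "is_vertex n \<gamma> v \<longleftrightarrow> v \<in> Hpoly n \<gamma> \<and>
     (\<forall>v1 v2 (l::real). 0 < l \<and> l < 1 \<and> v1 \<in> Hpoly n \<gamma> \<and> v2 \<in> Hpoly n \<gamma> \<and>
        (\<forall>y<n. \<forall>d z. v y d z = l * v1 y d z + (1 - l) * v2 y d z)
        \<longrightarrow> Mvec n v1 = Mvec n v \<and> Mvec n v2 = Mvec n v)"

definition arrays :: "nat \<Rightarrow> (nat \<Rightarrow> bool \<Rightarrow> bool \<Rightarrow> bool) set" where
  "arrays n = {B. \<forall>y d z. n \<le> y \<longrightarrow> \<not> B y d z}"

definition S1 :: "nat \<Rightarrow> (nat \<Rightarrow> bool \<Rightarrow> bool \<Rightarrow> bool) set" where
  "S1 n = {B \<in> arrays n. \<exists>t. t + 2 \<le> n \<and>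
      (\<forall>i. t \<le> i \<and> i < n \<longrightarrow> B i False False \<and> B i False True) \<and>
      (\<forall>i<t. B i False False \<noteq> B i False True) \<and>
      (\<forall>i<n. B i True False \<noteq> B i True True) \<and>
      (\<exists>i<n. \<exists>j<n. B i True False \<and> B j True True)}"

definition S2 :: "nat \<Rightarrow> (nat \<Rightarrow> bool \<Rightarrow> bool \<Rightarrow> bool) set" where
  "S2 n = {B \<in> arrays n.
      B (n - 1) False False \<and> B (n - 1) False True \<and> B 0 True False \<and> B 0 True True \<and>
      (\<forall>i. i < n - 1 \<longrightarrow> B i False False \<noteq> B i False True) \<and>
      (\<forall>j. 0 < j \<and> j < n \<longrightarrow> B j True False \<noteq> B j True True)}"

definition S3 :: "nat \<Rightarrow> (nat \<Rightarrow> bool \<Rightarrow> bool \<Rightarrow> bool) set" where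
  "S3 n = {B \<in> arrays n. \<exists>t. 1 \<le> t \<and> t + 1 \<le> n \<and>
      (\<forall>i\<le>t. B i True False \<and> B i True True) \<and>
      (\<forall>i. t < i \<and> i < n \<longrightarrow> B i True False \<noteq> B i True True) \<and>
      (\<forall>i<n. B i False False \<noteq> B i False True) \<and>
      (\<exists>i<n. \<exists>j<n. B i False False \<and> B j False True)}"

definition Ssig :: "nat \<Rightarrow> (nat \<Rightarrow> bool \<Rightarrow> bool \<Rightarrow> bool) set" where
  "Ssig n = S1 n \<union> S2 n \<union> S3 n"

end

theory Submission
  imports Defs "HOL-Library.FuncSet"
begin

text \<open>
  Shift coordinates by \<gamma>: c(y,0,z) = v(y,0,z) + \<gamma> y and c(y,1,z) = v(y,1,z) - \<gamma> y. In these
  coordinates H is cut out by c(i,0,0) + c(i,0,1) \<le> \<gamma> 0 + \<gamma> i, by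
  c(j,1,0) + c(j,1,1) \<le> -(\<gamma> j + \<gamma> (n - 1)), and by max c(y,0,z) + max c(y,1,\<not> z) \<le> 0.
  Every row of M adds a coordinate with z = 0 to one with z = 1, and the kernel of M is spanned
  by the vector that is 1 on the former and -1 on the latter. Hence a point of H is a vertex iff
  the rows tight at it connect all 4n coordinates: both cross constraints are active, every
  coordinate is maximal or tied to a maximal one by a tight pair, and some tight pair has both
  coordinates maximal. The signature of a vertex, recording which coordinates are maximal,
  determines it up to the kernel of M. Its level \<kappa> = max c(y,0,0) + max c(y,0,1) is one of
  the values \<gamma> 0 + \<gamma> t or \<gamma> t + \<gamma> (n - 1), and the cases \<kappa> = \<gamma> 0 + \<gamma> t with t < n - 1,
  \<kappa> = \<gamma> 0 + \<gamma> (n - 1) and \<kappa> = \<gamma> t + \<gamma> (n - 1) with t > 0 yield exactly the signatures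
  in S1, S2 and S3. Finally S3 is the mirror image of S1, |S1| = (2^(n-1) - 1)(2^n - 2) and
  |S2| = 4^(n-1).
\<close>

type_synonym vec = "nat \<Rightarrow> bool \<Rightarrow> bool \<Rightarrow> real"
type_synonym array = "nat \<Rightarrow> bool \<Rightarrow> bool \<Rightarrow> bool"

lemma Mrow_simps:
  "Mrow v i j False False = v i False False + v i False True"
  "Mrow v i j False True = v i False False + v j True True"
  "Mrow v i j True False = v j True False + v i False True"
  "Mrow v i j True True = v j True False + v j True True"
  by (simp_all add: Mrow_def)

lemma Mrow_add_scaled:
  "Mrow (\<lambda>y d z. v y d z + c * w y d z) i j d0 d1 = Mrow v i j d0 d1 + c * Mrow w i j d0 d1"
  by (simp add: Mrow_def algebra_simps)

lemma Mrow_diff: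
  "Mrow (\<lambda>y d z. u y d z - v y d z) i j d0 d1 = Mrow u i j d0 d1 - Mrow v i j d0 d1"
  by (simp add: Mrow_def)

lemma Mvec_eq_iff_Mrow_eq:
  "Mvec n v1 = Mvec n v2 \<longleftrightarrow> (\<forall>i<n. \<forall>j<n. \<forall>d0 d1. Mrow v1 i j d0 d1 = Mrow v2 i j d0 d1)"
proof
  assume eq: "Mvec n v1 = Mvec n v2"
  show "\<forall>i<n. \<forall>j<n. \<forall>d0 d1. Mrow v1 i j d0 d1 = Mrow v2 i j d0 d1"
  proof (intro allI impI)
    fix i j d0 d1 assume "i < n" "j < n"
    then show "Mrow v1 i j d0 d1 = Mrow v2 i j d0 d1"
      using fun_cong[OF eq, of "(i, j, d0, d1)"] by (simp add: Mvec_def)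
  qed
next
  assume rows: "\<forall>i<n. \<forall>j<n. \<forall>d0 d1. Mrow v1 i j d0 d1 = Mrow v2 i j d0 d1"
  show "Mvec n v1 = Mvec n v2"
  proof (rule ext, clarify)
    fix i j d0 d1
    show "Mvec n v1 (i, j, d0, d1) = Mvec n v2 (i, j, d0, d1)"
      using rows by (simp add: Mvec_def)
  qed
qed

lemma Mvec_eq_iff_shift:
  "Mvec n v1 = Mvec n v2 \<longleftrightarrow> (\<exists>t. \<forall>y<n. \<forall>d z. v1 y d z = v2 y d z + (if z then - t else t))"
proof
  assume eq: "Mvec n v1 = Mvec n v2"
  have row: "Mrow v1 i j d0 d1 = Mrow v2 i j d0 d1" if "i < n" "j < n" for i j d0 d1
    using eq that by (simp add: Mvec_eq_iff_Mrow_eq)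
  show "\<exists>t. \<forall>y<n. \<forall>d z. v1 y d z = v2 y d z + (if z then - t else t)"
  proof (cases "n = 0")
    case False
    then have "0 < n" by simp
    define t where "t = v1 0 False False - v2 0 False False"
    have TT: "v1 y True True = v2 y True True - t" if "y < n" for y
      using row[OF \<open>0 < n\<close> that, of False True] by (simp add: Mrow_simps t_def)
    have FF: "v1 y False False = v2 y False False + t" if "y < n" for y
      using row[OF that \<open>0 < n\<close>, of False True] TT[OF \<open>0 < n\<close>] by (simp add: Mrow_simps)
    have FT: "v1 y False True = v2 y False True - t" if "y < n" for y
      using row[OF that that, of False False] FF[OF that] by (simp add: Mrow_simps)
    have TF: "v1 y True False = v2 y True False + t" if "y < n" for y
      using row[OF that that, of True True] TT[OF that] by (simp add: Mrow_simps)
    show ?thesis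
    proof (intro exI allI impI)
      fix y d z assume "y < n"
      then show "v1 y d z = v2 y d z + (if z then - t else t)"
        by (cases d; cases z) (simp_all add: FF FT TF TT)
    qed
  qed simp
next
  assume "\<exists>t. \<forall>y<n. \<forall>d z. v1 y d z = v2 y d z + (if z then - t else t)"
  then obtain t where "\<forall>y<n. \<forall>d z. v1 y d z = v2 y d z + (if z then - t else t)" ..
  then show "Mvec n v1 = Mvec n v2"
    unfolding Mvec_eq_iff_Mrow_eq by (simp add: Mrow_def)
qed

lemma card_image_eq_if_same_fibres:
  assumes "\<And>x y. x \<in> A \<Longrightarrow> y \<in> A \<Longrightarrow> f x = f y \<longleftrightarrow> g x = g y"
  shows "card (f ` A) = card (g ` A)"
proof -
  let ?h = "\<lambda>a. g (inv_into A f a)"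
  have h: "?h (f x) = g x" if "x \<in> A" for x
    using assms[of "inv_into A f (f x)" x] that inv_into_into[of "f x" f A] f_inv_into_f[of "f x" f A]
    by auto
  have "inj_on ?h (f ` A)"
    using h assms by (auto simp: inj_on_def)
  moreover have "?h ` f ` A = g ` A"
    using h by (auto simp: image_iff)
  ultimately show ?thesis by (metis card_image)
qed

section \<open>Vertices as rigid points\<close>

definition tight :: "(nat \<Rightarrow> real) \<Rightarrow> vec \<Rightarrow> nat \<Rightarrow> nat \<Rightarrow> bool \<Rightarrow> bool \<Rightarrow> bool" where
  "tight \<gamma> v i j d0 d1 \<longleftrightarrow> Mrow v i j d0 d1 = \<gamma> j - \<gamma> i"

definition tight_kernel :: "nat \<Rightarrow> (nat \<Rightarrow> real) \<Rightarrow> vec \<Rightarrow> vec \<Rightarrow> bool" where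
  "tight_kernel n \<gamma> v w \<longleftrightarrow> (\<forall>i<n. \<forall>j<n. \<forall>d0 d1. tight \<gamma> v i j d0 d1 \<longrightarrow> Mrow w i j d0 d1 = 0)"

definition rigid :: "nat \<Rightarrow> (nat \<Rightarrow> real) \<Rightarrow> vec \<Rightarrow> bool" where
  "rigid n \<gamma> v \<longleftrightarrow> (\<forall>w. tight_kernel n \<gamma> v w \<longrightarrow> (\<forall>i<n. \<forall>j<n. \<forall>d0 d1. Mrow w i j d0 d1 = 0))"

lemma tight_kernelI:
  "(\<And>i j d0 d1. i < n \<Longrightarrow> j < n \<Longrightarrow> Mrow w i j d0 d1 \<noteq> 0 \<Longrightarrow> \<not> tight \<gamma> v i j d0 d1) \<Longrightarrow>
    tight_kernel n \<gamma> v w"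
  unfolding tight_kernel_def by blast

lemma rigidD: "rigid n \<gamma> v \<Longrightarrow> tight_kernel n \<gamma> v w \<Longrightarrow> i < n \<Longrightarrow> j < n \<Longrightarrow> Mrow w i j d0 d1 = 0"
  unfolding rigid_def by blast

lemma eventually_add_small_le:
  fixes a b c :: real
  assumes "a \<le> c" and "a = c \<Longrightarrow> b = 0"
  shows "\<forall>\<^sub>F \<epsilon> in at_right 0. a + \<epsilon> * \<bar>b\<bar> \<le> c"
proof (cases "a = c")
  case False
  with assms(1) have "a < c" by simp
  moreover have "((\<lambda>\<epsilon>. a + \<epsilon> * \<bar>b\<bar>) \<longlongrightarrow> a) (at_right 0)"
    by (auto intro!: tendsto_eq_intros)
  ultimately show ?thesis
    by (metis (mono_tags, lifting) eventually_mono less_imp_le order_tendstoD(2))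
qed (use assms(2) in simp)

lemma Hpoly_small_perturbation:
  assumes v: "v \<in> Hpoly n \<gamma>" and kernel: "tight_kernel n \<gamma> v w"
  shows "\<exists>\<epsilon>>0. \<forall>c. \<bar>c\<bar> \<le> \<epsilon> \<longrightarrow> (\<lambda>y d z. v y d z + c * w y d z) \<in> Hpoly n \<gamma>"
proof -
  let ?ok = "\<lambda>\<epsilon> (i, j, d0, d1). Mrow v i j d0 d1 + \<epsilon> * \<bar>Mrow w i j d0 d1\<bar> \<le> \<gamma> j - \<gamma> i"
  let ?rows = "{..<n} \<times> {..<n} \<times> (UNIV :: bool set) \<times> (UNIV :: bool set)"
  have "finite ?rows" by simp
  moreover have "\<forall>row\<in>?rows. \<forall>\<^sub>F \<epsilon> in at_right 0. ?ok \<epsilon> row"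
  proof
    fix row assume "row \<in> ?rows"
    then obtain i j d0 d1 where row: "row = (i, j, d0, d1)" and ij: "i < n" "j < n" by auto
    have "Mrow v i j d0 d1 \<le> \<gamma> j - \<gamma> i" using v ij by (simp add: Hpoly_def)
    from eventually_add_small_le[OF this] show "\<forall>\<^sub>F \<epsilon> in at_right 0. ?ok \<epsilon> row"
      using kernel ij by (simp add: row tight_kernel_def tight_def)
  qed
  ultimately have "\<forall>\<^sub>F \<epsilon> in at_right 0. \<forall>row\<in>?rows. ?ok \<epsilon> row"
    by (rule eventually_ball_finite)
  then obtain b where "b > 0" and b: "\<And>\<epsilon>. 0 < \<epsilon> \<Longrightarrow> \<epsilon> < b \<Longrightarrow> \<forall>row\<in>?rows. ?ok \<epsilon> row"
    by (auto simp: eventually_at_right_field)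
  have "(\<lambda>y d z. v y d z + c * w y d z) \<in> Hpoly n \<gamma>" if c: "\<bar>c\<bar> \<le> b / 2" for c
    unfolding Hpoly_def
  proof (intro CollectI allI impI)
    fix i j d0 d1 assume "i < n" "j < n"
    then have "Mrow v i j d0 d1 + b / 2 * \<bar>Mrow w i j d0 d1\<bar> \<le> \<gamma> j - \<gamma> i"
      using bspec[OF b[of "b / 2"], of "(i, j, d0, d1)"] \<open>b > 0\<close> by simp
    moreover have "c * Mrow w i j d0 d1 \<le> \<bar>c\<bar> * \<bar>Mrow w i j d0 d1\<bar>"
      by (metis abs_ge_self abs_mult)
    moreover have "\<bar>c\<bar> * \<bar>Mrow w i j d0 d1\<bar> \<le> b / 2 * \<bar>Mrow w i j d0 d1\<bar>"
      using c by (rule mult_right_mono) simp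
    ultimately show "Mrow (\<lambda>y d z. v y d z + c * w y d z) i j d0 d1 \<le> \<gamma> j - \<gamma> i"
      unfolding Mrow_add_scaled by linarith
  qed
  then show ?thesis using \<open>b > 0\<close> by (intro exI[of _ "b / 2"]) simp
qed

lemma convex_combination_eq_bound:
  fixes a b c l :: real
  assumes "0 < l" "l < 1" "a \<le> c" "b \<le> c" "l * a + (1 - l) * b = c"
  shows "a = c"
proof (rule ccontr)
  assume "a \<noteq> c"
  then have "l * a + (1 - l) * b < l * c + (1 - l) * c"
    using assms by (intro add_less_le_mono mult_strict_left_mono mult_left_mono) auto
  then show False using assms(5) by (simp add: algebra_simps)
qed

lemma is_vertexD:
  assumes "is_vertex n \<gamma> v" "0 < l" "l < 1" "v1 \<in> Hpoly n \<gamma>" "v2 \<in> Hpoly n \<gamma>"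
    and "\<And>y d z. y < n \<Longrightarrow> v y d z = l * v1 y d z + (1 - l) * v2 y d z"
  shows "Mvec n v1 = Mvec n v"
  using assms unfolding is_vertex_def by blast

lemma vertex_rigid:
  assumes vertex: "is_vertex n \<gamma> v"
  shows "rigid n \<gamma> v"
  unfolding rigid_def
proof (intro allI impI)
  fix w i j d0 d1 assume kernel: "tight_kernel n \<gamma> v w" and ij: "i < n" "j < n"
  have v: "v \<in> Hpoly n \<gamma>" using vertex by (simp add: is_vertex_def)
  from Hpoly_small_perturbation[OF v kernel] obtain \<epsilon> where "\<epsilon> > 0"
    and \<epsilon>: "\<And>c. \<bar>c\<bar> \<le> \<epsilon> \<Longrightarrow> (\<lambda>y d z. v y d z + c * w y d z) \<in> Hpoly n \<gamma>"
    by blast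
  define vp where "vp = (\<lambda>y d z. v y d z + \<epsilon> * w y d z)"
  define vm where "vm = (\<lambda>y d z. v y d z + - \<epsilon> * w y d z)"
  have "vp \<in> Hpoly n \<gamma>" "vm \<in> Hpoly n \<gamma>"
    using \<epsilon>[of \<epsilon>] \<epsilon>[of "- \<epsilon>"] \<open>\<epsilon> > 0\<close> by (simp_all add: vp_def vm_def)
  moreover have "v y d z = 1 / 2 * vp y d z + (1 - 1 / 2) * vm y d z" for y d z
    by (simp add: vp_def vm_def algebra_simps)
  ultimately have "Mvec n vp = Mvec n v"
    by (intro is_vertexD[OF vertex, of "1 / 2" vp vm]) simp_all
  then have "Mrow vp i j d0 d1 = Mrow v i j d0 d1"
    using ij by (simp add: Mvec_eq_iff_Mrow_eq)
  then show "Mrow w i j d0 d1 = 0"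
    using \<open>\<epsilon> > 0\<close> by (simp add: vp_def Mrow_add_scaled)
qed

lemma rigid_convex_combination_Mvec_eq:
  assumes v: "v \<in> Hpoly n \<gamma>" and rigid: "rigid n \<gamma> v"
    and u: "u \<in> Hpoly n \<gamma>" "u' \<in> Hpoly n \<gamma>" and l: "0 < l" "l < 1"
    and comb: "\<forall>y<n. \<forall>d z. v y d z = l * u y d z + (1 - l) * u' y d z"
  shows "Mvec n u = Mvec n v"
proof -
  have row: "Mrow v i j d0 d1 = l * Mrow u i j d0 d1 + (1 - l) * Mrow u' i j d0 d1"
    if "i < n" "j < n" for i j d0 d1
    using comb that by (simp add: Mrow_def algebra_simps)
  have "tight_kernel n \<gamma> v (\<lambda>y d z. u y d z - v y d z)"
    unfolding tight_kernel_def
  proof (intro allI impI)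
    fix i j d0 d1 assume ij: "i < n" "j < n" and tight: "tight \<gamma> v i j d0 d1"
    have "Mrow u i j d0 d1 \<le> \<gamma> j - \<gamma> i" "Mrow u' i j d0 d1 \<le> \<gamma> j - \<gamma> i"
      using u ij by (simp_all add: Hpoly_def)
    moreover have "l * Mrow u i j d0 d1 + (1 - l) * Mrow u' i j d0 d1 = \<gamma> j - \<gamma> i"
      using row[OF ij] tight by (simp add: tight_def)
    ultimately have "Mrow u i j d0 d1 = \<gamma> j - \<gamma> i"
      by (rule convex_combination_eq_bound[OF l])
    with tight show "Mrow (\<lambda>y d z. u y d z - v y d z) i j d0 d1 = 0"
      by (simp add: Mrow_diff tight_def)
  qed
  then have "Mrow (\<lambda>y d z. u y d z - v y d z) i j d0 d1 = 0" if "i < n" "j < n" for i j d0 d1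
    using rigidD[OF rigid] that by blast
  then show ?thesis by (simp add: Mvec_eq_iff_Mrow_eq Mrow_diff)
qed

theorem vertex_iff_rigid: "is_vertex n \<gamma> v \<longleftrightarrow> v \<in> Hpoly n \<gamma> \<and> rigid n \<gamma> v"
proof (intro iffI conjI)
  assume "v \<in> Hpoly n \<gamma> \<and> rigid n \<gamma> v"
  then have v: "v \<in> Hpoly n \<gamma>" and rigid: "rigid n \<gamma> v" by simp_all
  show "is_vertex n \<gamma> v" unfolding is_vertex_def
  proof (rule conjI[OF v], intro allI impI)
    fix v1 v2 and l :: real
    assume "0 < l \<and> l < 1 \<and> v1 \<in> Hpoly n \<gamma> \<and> v2 \<in> Hpoly n \<gamma> \<and>
      (\<forall>y<n. \<forall>d z. v y d z = l * v1 y d z + (1 - l) * v2 y d z)"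
    then have l: "0 < l" "l < 1" and H: "v1 \<in> Hpoly n \<gamma>" "v2 \<in> Hpoly n \<gamma>"
      and comb: "\<forall>y<n. \<forall>d z. v y d z = l * v1 y d z + (1 - l) * v2 y d z" by simp_all
    have comb': "\<forall>y<n. \<forall>d z. v y d z = (1 - l) * v2 y d z + (1 - (1 - l)) * v1 y d z"
    proof (intro allI impI)
      fix y d z assume "y < n"
      with comb have "v y d z = l * v1 y d z + (1 - l) * v2 y d z" by blast
      then show "v y d z = (1 - l) * v2 y d z + (1 - (1 - l)) * v1 y d z" by simp
    qed
    show "Mvec n v1 = Mvec n v \<and> Mvec n v2 = Mvec n v"
      using rigid_convex_combination_Mvec_eq[OF v rigid H l comb]
        rigid_convex_combination_Mvec_eq[OF v rigid H(2,1) _ _ comb'] l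
      by simp
  qed
qed (simp_all add: is_vertex_def vertex_rigid)

section \<open>Coordinates adapted to \<gamma>\<close>

locale ordered_levels =
  fixes n :: nat and \<gamma> :: "nat \<Rightarrow> real"
  assumes n_pos: "0 < n"
    and \<gamma>_strict_mono: "\<And>i j. i < j \<Longrightarrow> j < n \<Longrightarrow> \<gamma> i < \<gamma> j"
begin

lemma \<gamma>_le_iff: "i < n \<Longrightarrow> j < n \<Longrightarrow> \<gamma> i \<le> \<gamma> j \<longleftrightarrow> i \<le> j"
  using \<gamma>_strict_mono[of i j] \<gamma>_strict_mono[of j i] by (cases i j rule: linorder_cases) auto

lemma \<gamma>_first_le: "j < n \<Longrightarrow> \<gamma> 0 \<le> \<gamma> j"
  by (simp add: \<gamma>_le_iff)

lemma \<gamma>_le_last: "i < n \<Longrightarrow> \<gamma> i \<le> \<gamma> (n - 1)"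
  by (simp add: \<gamma>_le_iff)

text \<open>Rows (i, j, 0, 0) are tightest for j = 0 and rows (i, j, 1, 1) for i = n - 1.\<close>

definition lcap :: "nat \<Rightarrow> real" where
  "lcap i = \<gamma> 0 + \<gamma> i"

definition rcap :: "nat \<Rightarrow> real" where
  "rcap j = \<gamma> j + \<gamma> (n - 1)"

definition coord :: "vec \<Rightarrow> bool \<Rightarrow> bool \<Rightarrow> nat \<Rightarrow> real" where
  "coord v d z y = (if d then v y d z - \<gamma> y else v y d z + \<gamma> y)"

definition coord_max :: "vec \<Rightarrow> bool \<Rightarrow> bool \<Rightarrow> real" where
  "coord_max v d z = Max (coord v d z ` {..<n})"

definition signature :: "vec \<Rightarrow> array" where
  "signature v y d z \<longleftrightarrow> y < n \<and> coord v d z y = coord_max v d z"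

definition pair_bound :: "bool \<Rightarrow> nat \<Rightarrow> real" where
  "pair_bound d y = (if d then - rcap y else lcap y)"

definition pair_tight :: "vec \<Rightarrow> bool \<Rightarrow> nat \<Rightarrow> bool" where
  "pair_tight v d y \<longleftrightarrow> coord v d False y + coord v d True y = pair_bound d y"

definition balanced :: "vec \<Rightarrow> bool \<Rightarrow> bool" where
  "balanced v z \<longleftrightarrow> coord_max v False z + coord_max v True (\<not> z) = 0"

lemma Mrow_coord:
  "Mrow v i j False False = coord v False False i + coord v False True i - 2 * \<gamma> i"
  "Mrow v i j False True = coord v False False i + coord v True True j + \<gamma> j - \<gamma> i"
  "Mrow v i j True False = coord v False True i + coord v True False j + \<gamma> j - \<gamma> i"
  "Mrow v i j True True = coord v True False j + coord v True True j + 2 * \<gamma> j"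
  by (simp_all add: Mrow_simps coord_def)

lemma coord_le_max: "y < n \<Longrightarrow> coord v d z y \<le> coord_max v d z"
  by (simp add: coord_max_def)

lemma signature_exists: "\<exists>y. signature v y d z"
proof -
  have "coord_max v d z \<in> coord v d z ` {..<n}"
    unfolding coord_max_def using n_pos by (intro Max_in) auto
  then show ?thesis by (auto simp: signature_def)
qed

lemma signature_lt: "signature v y d z \<Longrightarrow> y < n"
  by (simp add: signature_def)

lemma lcap_last: "lcap (n - 1) = rcap 0"
  by (simp add: lcap_def rcap_def)

lemma pair_tight_sum:
  "pair_tight v d y \<Longrightarrow> coord v d z y + coord v d (\<not> z) y = pair_bound d y"
  by (cases z) (auto simp: pair_tight_def)

lemma HpolyI:
  assumes pairs: "\<And>y d. y < n \<Longrightarrow> coord v d False y + coord v d True y \<le> pair_bound d y"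
    and cross: "\<And>z. coord_max v False z + coord_max v True (\<not> z) \<le> 0"
  shows "v \<in> Hpoly n \<gamma>"
  unfolding Hpoly_def
proof (intro CollectI allI impI)
  fix i j d0 d1 assume ij: "i < n" "j < n"
  have "\<gamma> 0 \<le> \<gamma> j" "\<gamma> i \<le> \<gamma> (n - 1)" using \<gamma>_first_le[OF ij(2)] \<gamma>_le_last[OF ij(1)] .
  moreover have cross_coord: "coord v False z i + coord v True (\<not> z) j \<le> 0" for z
    using cross[of z] coord_le_max[OF ij(1), of v False z] coord_le_max[OF ij(2), of v True "\<not> z"]
    by linarith
  moreover have "coord v False False i + coord v False True i \<le> lcap i"
    "coord v True False j + coord v True True j \<le> - rcap j"
    using pairs[OF ij(1), of False] pairs[OF ij(2), of True] by (simp_all add: pair_bound_def)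
  ultimately show "Mrow v i j d0 d1 \<le> \<gamma> j - \<gamma> i"
    using cross_coord[of False] cross_coord[of True]
    by (cases d0; cases d1) (auto simp: Mrow_coord lcap_def rcap_def)
qed

section \<open>Rigidity as connectivity of the tight rows\<close>

definition good :: "vec \<Rightarrow> bool" where
  "good v \<longleftrightarrow> (\<forall>z. balanced v z) \<and>
     (\<forall>y<n. \<forall>d z. signature v y d z \<or> pair_tight v d y \<and> signature v y d (\<not> z)) \<and>
     (\<exists>y<n. \<exists>d. pair_tight v d y \<and> signature v y d False \<and> signature v y d True)"

context
  fixes v assumes v: "v \<in> Hpoly n \<gamma>"
begin

lemma row_le: "i < n \<Longrightarrow> j < n \<Longrightarrow> Mrow v i j d0 d1 \<le> \<gamma> j - \<gamma> i"
  using v by (simp add: Hpoly_def)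

lemma pair_le: "y < n \<Longrightarrow> coord v d False y + coord v d True y \<le> pair_bound d y"
  using row_le[of y 0 False False] row_le[of "n - 1" y True True] n_pos
  by (cases d) (simp_all add: Mrow_coord pair_bound_def lcap_def rcap_def)

lemma cross_le: "coord_max v False z + coord_max v True (\<not> z) \<le> 0"
proof -
  obtain i j where "signature v i False z" "signature v j True (\<not> z)"
    using signature_exists by blast
  then show ?thesis
    using row_le[of i j z "\<not> z"] by (cases z) (auto simp: signature_def Mrow_coord)
qed

lemma tight_FF: "i < n \<Longrightarrow> j < n \<Longrightarrow> tight \<gamma> v i j False False \<Longrightarrow> pair_tight v False i"
  using pair_le[of i False] \<gamma>_first_le[of j]
  by (simp add: tight_def pair_tight_def pair_bound_def Mrow_coord lcap_def)

lemma tight_TT: "i < n \<Longrightarrow> j < n \<Longrightarrow> tight \<gamma> v i j True True \<Longrightarrow> pair_tight v True j"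
  using pair_le[of j True] \<gamma>_le_last[of i]
  by (simp add: tight_def pair_tight_def pair_bound_def Mrow_coord rcap_def)

lemma tight_FT_iff: "i < n \<Longrightarrow> j < n \<Longrightarrow> tight \<gamma> v i j False True \<longleftrightarrow>
    signature v i False False \<and> signature v j True True \<and> balanced v False"
  using coord_le_max[of i v False False] coord_le_max[of j v True True] cross_le[of False]
  by (auto simp: tight_def signature_def balanced_def Mrow_coord)

lemma tight_TF_iff: "i < n \<Longrightarrow> j < n \<Longrightarrow> tight \<gamma> v i j True False \<longleftrightarrow>
    signature v i False True \<and> signature v j True False \<and> balanced v True"
  using coord_le_max[of i v False True] coord_le_max[of j v True False] cross_le[of True]
  by (auto simp: tight_def signature_def balanced_def Mrow_coord)

lemma tight_pair_left: "pair_tight v False i \<Longrightarrow> tight \<gamma> v i 0 False False"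
  by (simp add: tight_def pair_tight_def pair_bound_def Mrow_coord lcap_def)

lemma tight_pair_right: "pair_tight v True j \<Longrightarrow> tight \<gamma> v (n - 1) j True True"
  by (simp add: tight_def pair_tight_def pair_bound_def Mrow_coord rcap_def)

context
  assumes rigid: "rigid n \<gamma> v"
begin

text \<open>
  The cross row (i, j, z, \<not> z) joins the coordinates (i, False, z) and (j, True, \<not> z), so
  coordinate (y, d, z) lies on the cross rows (i, j, z', \<not> z') with z' = (z \<noteq> d).
\<close>

lemma rigid_cross_unless_pair_tight:
  assumes y: "y < n" and "\<not> pair_tight v d y"
  shows "signature v y d z \<and> balanced v (z \<noteq> d)"
proof (rule ccontr)
  assume not_cross: "\<not> (signature v y d z \<and> balanced v (z \<noteq> d))"
  define w :: vec where "w = (\<lambda>y' d' z'. if y' = y \<and> d' = d \<and> z' = z then 1 else 0)"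
  have "Mrow w y y d d = 0"
  proof (rule rigidD[OF rigid tight_kernelI y y])
    fix i j d0 d1 assume ij: "i < n" "j < n" and moved: "Mrow w i j d0 d1 \<noteq> 0"
    show "\<not> tight \<gamma> v i j d0 d1"
      using moved not_cross \<open>\<not> pair_tight v d y\<close> tight_FF[OF ij] tight_TT[OF ij]
        tight_FT_iff[OF ij] tight_TF_iff[OF ij]
      by (cases d; cases z; cases d0; cases d1) (auto simp: w_def Mrow_simps split: if_splits)
  qed
  then show False by (cases d; cases z) (simp_all add: w_def Mrow_simps)
qed

lemma rigid_pair_meets_cross:
  assumes y: "y < n"
  shows "\<exists>z. signature v y d z \<and> balanced v (z \<noteq> d)"
proof (rule ccontr)
  assume not_cross: "\<not> ?thesis"
  define w :: vec where "w = (\<lambda>y' d' z'. if y' = y \<and> d' = d then (if z' then - 1 else 1) else 0)"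
  have "Mrow w y y d (\<not> d) = 0"
  proof (rule rigidD[OF rigid tight_kernelI y y])
    fix i j d0 d1 assume ij: "i < n" "j < n" and moved: "Mrow w i j d0 d1 \<noteq> 0"
    show "\<not> tight \<gamma> v i j d0 d1"
      using moved not_cross tight_FT_iff[OF ij] tight_TF_iff[OF ij]
      by (cases d; cases d0; cases d1) (auto simp: w_def Mrow_simps split: if_splits)
  qed
  then show False by (cases d) (simp_all add: w_def Mrow_simps)
qed

lemma rigid_balanced: "balanced v z"
proof (rule ccontr)
  assume unbalanced: "\<not> balanced v z"
  have last: "n - 1 < n" and first: "0 < n" using n_pos by auto
  have "pair_tight v False (n - 1)"
    using rigid_cross_unless_pair_tight[OF last, of False z] unbalanced by auto
  moreover have "signature v (n - 1) False (\<not> z) \<and> balanced v (\<not> z)"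
    using rigid_pair_meets_cross[OF last, of False] unbalanced by (metis (full_types))
  moreover have "pair_tight v True 0"
    using rigid_cross_unless_pair_tight[OF first, of True "\<not> z"] unbalanced by auto
  moreover have "signature v 0 True z"
    using rigid_pair_meets_cross[OF first, of True] unbalanced by (metis (full_types))
  ultimately have "coord v False z (n - 1) + coord v True (\<not> z) 0 = 0"
    using pair_tight_sum[of v False "n - 1" z] pair_tight_sum[of v True 0 z] lcap_last
    by (auto simp: signature_def balanced_def pair_bound_def)
  then have "coord_max v False z + coord_max v True (\<not> z) = 0"
    using coord_le_max[OF last, of v False z] coord_le_max[OF first, of v True "\<not> z"] cross_le[of z]
    by linarith
  then show False using unbalanced by (simp add: balanced_def)
qed

lemma rigid_bridge: "\<exists>y<n. \<exists>d. pair_tight v d y \<and> signature v y d False \<and> signature v y d True"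
proof (rule ccontr)
  assume no_bridge: "\<not> ?thesis"
  \<comment> \<open>+1 or -1 on the tight-row component of the maximal coordinates (y, d, d)\<close>
  define w :: vec where
    "w = (\<lambda>y d z. if signature v y d d \<and> (z = d \<or> pair_tight v d y) then (if z then - 1 else 1) else 0)"
  have kernel: "tight_kernel n \<gamma> v w"
  proof (rule tight_kernelI)
    fix i j d0 d1 assume ij: "i < n" "j < n" and "Mrow w i j d0 d1 \<noteq> 0"
    then show "\<not> tight \<gamma> v i j d0 d1"
      using no_bridge tight_FF[OF ij] tight_TT[OF ij] tight_FT_iff[OF ij] tight_TF_iff[OF ij]
      by (cases d0; cases d1) (auto simp: w_def Mrow_simps split: if_splits)
  qed
  obtain i0 where i0: "signature v i0 False False" using signature_exists by blast
  have "\<exists>i<n. \<exists>j<n. \<exists>d0 d1. Mrow w i j d0 d1 \<noteq> 0"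
  proof (cases "pair_tight v False i0")
    case False
    then have "Mrow w i0 i0 False False \<noteq> 0" using i0 by (simp add: w_def Mrow_simps)
    then show ?thesis using signature_lt[OF i0] by blast
  next
    case True
    show ?thesis
    proof (cases "\<exists>j<n. \<not> signature v j True True \<or> \<not> pair_tight v True j")
      case True
      then obtain j where j: "j < n" "\<not> signature v j True True \<or> \<not> pair_tight v True j" by blast
      then have "Mrow w i0 j False True \<noteq> 0 \<or> Mrow w i0 j True False \<noteq> 0"
        using i0 \<open>pair_tight v False i0\<close> by (auto simp: w_def Mrow_simps)
      then show ?thesis using signature_lt[OF i0] j(1) by blast
    next
      case False
      obtain j where "signature v j True False" using signature_exists by blast
      then show ?thesis using False no_bridge signature_lt by blast
    qed
  qed
  then obtain i j d0 d1 where "i < n" "j < n" "Mrow w i j d0 d1 \<noteq> 0" by blast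
  with rigidD[OF rigid kernel] show False by blast
qed

lemma rigid_good: "good v"
  unfolding good_def
proof (intro conjI)
  show "\<forall>z. balanced v z" using rigid_balanced by blast
  show "\<forall>y<n. \<forall>d z. signature v y d z \<or> pair_tight v d y \<and> signature v y d (\<not> z)"
  proof (intro allI impI)
    fix y d z assume y: "y < n"
    obtain z' where "signature v y d z'" using rigid_pair_meets_cross[OF y, of d] by blast
    then show "signature v y d z \<or> pair_tight v d y \<and> signature v y d (\<not> z)"
      using rigid_cross_unless_pair_tight[OF y, of d z] by (cases z; cases z') auto
  qed
  show "\<exists>y<n. \<exists>d. pair_tight v d y \<and> signature v y d False \<and> signature v y d True"
    by (rule rigid_bridge)
qed

end

context
  fixes w assumes good: "good v" and kernel: "tight_kernel n \<gamma> v w"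
begin

lemma kernel_cross:
  assumes "signature v i False z" "signature v j True (\<not> z)"
  shows "w i False z + w j True (\<not> z) = 0"
proof -
  have ij: "i < n" "j < n" using assms by (simp_all add: signature_def)
  have "balanced v z" using good by (simp add: good_def)
  then have "tight \<gamma> v i j z (\<not> z)"
    using assms tight_FT_iff[OF ij] tight_TF_iff[OF ij] by (cases z) auto
  then have "Mrow w i j z (\<not> z) = 0" using kernel ij by (simp add: tight_kernel_def)
  then show ?thesis by (cases z) (simp_all add: Mrow_simps add.commute)
qed

lemma kernel_pair:
  assumes "y < n" "pair_tight v d y"
  shows "w y d False + w y d True = 0"
proof (cases d)
  case False
  then have "tight \<gamma> v y 0 False False" using tight_pair_left assms by simp
  then show ?thesis
    using kernel[unfolded tight_kernel_def, rule_format, of y 0 False False] assms n_pos False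
    by (simp add: Mrow_simps)
next
  case True
  then have "tight \<gamma> v (n - 1) y True True" using tight_pair_right assms by simp
  then show ?thesis
    using kernel[unfolded tight_kernel_def, rule_format, of "n - 1" y True True] assms n_pos True
    by (simp add: Mrow_simps)
qed

lemma kernel_on_signature:
  "\<exists>t. \<forall>y d z. signature v y d z \<longrightarrow> w y d z = (if z then - t else t)"
proof -
  have "\<forall>z. \<exists>a. (\<forall>i. signature v i False z \<longrightarrow> w i False z = a) \<and>
      (\<forall>j. signature v j True (\<not> z) \<longrightarrow> w j True (\<not> z) = - a)"
  proof
    fix z
    obtain i0 j0 where i0: "signature v i0 False z" and j0: "signature v j0 True (\<not> z)"
      using signature_exists by blast
    have right: "w j True (\<not> z) = - w i0 False z" if "signature v j True (\<not> z)" for j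
      using kernel_cross[OF i0 that] by simp
    have "w i False z = w i0 False z" if "signature v i False z" for i
      using kernel_cross[OF that j0] right[OF j0] by simp
    with right show "\<exists>a. (\<forall>i. signature v i False z \<longrightarrow> w i False z = a) \<and>
      (\<forall>j. signature v j True (\<not> z) \<longrightarrow> w j True (\<not> z) = - a)"
      by blast
  qed
  then obtain a where a: "\<forall>z. (\<forall>i. signature v i False z \<longrightarrow> w i False z = a z) \<and>
      (\<forall>j. signature v j True (\<not> z) \<longrightarrow> w j True (\<not> z) = - a z)"
    by (rule choice[THEN exE])
  have left: "w i False z = a z" if "signature v i False z" for i z
    using a that by blast
  have right: "w j True z = - a (\<not> z)" if "signature v j True z" for j z
    using a[rule_format, of "\<not> z"] that by simp
  obtain y d where bridge: "y < n" "pair_tight v d y" "signature v y d False" "signature v y d True"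
    using good by (auto simp: good_def)
  have "a True = - a False"
    using kernel_pair[OF bridge(1,2)] bridge(3,4) by (cases d) (auto simp: left right)
  then have "w y d z = (if z then - a False else a False)" if "signature v y d z" for y d z
    using that by (cases d; cases z) (auto simp: left right)
  then show ?thesis by blast
qed

lemma kernel_shift: "\<exists>t. \<forall>y<n. \<forall>d z. w y d z = (if z then - t else t)"
proof -
  obtain t where on_signature: "\<And>y d z. signature v y d z \<Longrightarrow> w y d z = (if z then - t else t)"
    using kernel_on_signature by blast
  have "w y d z = (if z then - t else t)" if "y < n" for y d z
  proof (cases "signature v y d z")
    case False
    then have "pair_tight v d y" "signature v y d (\<not> z)" using good that by (auto simp: good_def)
    then show ?thesis using kernel_pair[OF that, of d] on_signature[of y d "\<not> z"] by (cases z) auto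
  qed (rule on_signature)
  then show ?thesis by blast
qed

end

lemma good_rigid: "good v \<Longrightarrow> rigid n \<gamma> v"
  unfolding rigid_def
proof (intro allI impI)
  fix w i j d0 d1 assume "good v" "tight_kernel n \<gamma> v w" "i < n" "j < n"
  moreover from kernel_shift[OF this(1,2)] obtain t
    where "\<forall>y<n. \<forall>d z. w y d z = (if z then - t else t)" by blast
  ultimately show "Mrow w i j d0 d1 = 0" by (simp add: Mrow_def)
qed

end

lemma vertex_iff_good: "is_vertex n \<gamma> v \<longleftrightarrow> v \<in> Hpoly n \<gamma> \<and> good v"
  using vertex_iff_rigid good_rigid rigid_good by blast

section \<open>Signatures of vertices\<close>

lemma lcap_le_iff: "i < n \<Longrightarrow> j < n \<Longrightarrow> lcap i \<le> lcap j \<longleftrightarrow> i \<le> j"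
  by (simp add: lcap_def \<gamma>_le_iff)

lemma rcap_le_iff: "i < n \<Longrightarrow> j < n \<Longrightarrow> rcap i \<le> rcap j \<longleftrightarrow> i \<le> j"
  by (simp add: rcap_def \<gamma>_le_iff)

lemma lcap_le_rcap: "i < n \<Longrightarrow> j < n \<Longrightarrow> lcap i \<le> rcap j"
  using \<gamma>_first_le[of j] \<gamma>_le_last[of i] by (simp add: lcap_def rcap_def)

lemma lcap_less_rcap: "i < n - 1 \<Longrightarrow> j < n \<Longrightarrow> lcap i < rcap j"
  using \<gamma>_strict_mono[of i "n - 1"] \<gamma>_first_le[of j] n_pos by (simp add: lcap_def rcap_def)

lemma lcap_less_rcap_pos: "i < n \<Longrightarrow> 0 < j \<Longrightarrow> j < n \<Longrightarrow> lcap i < rcap j"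
  using \<gamma>_strict_mono[of 0 j] \<gamma>_le_last[of i] by (simp add: lcap_def rcap_def)

text \<open>
  The parameter \<kappa> is the level coord_max v False False + coord_max v False True of the
  vertices v with signature B.
\<close>

definition admissible :: "array \<Rightarrow> real \<Rightarrow> bool" where
  "admissible B \<kappa> \<longleftrightarrow>
     (\<forall>y<n. \<forall>d. B y d False \<or> B y d True) \<and>
     (\<forall>i<n. B i False False \<and> B i False True \<longleftrightarrow> \<kappa> \<le> lcap i) \<and>
     (\<forall>j<n. B j True False \<and> B j True True \<longleftrightarrow> rcap j \<le> \<kappa>) \<and>
     (\<forall>d z. \<exists>y<n. B y d z) \<and>
     \<kappa> \<in> lcap ` {..<n} \<union> rcap ` {..<n}"

lemma admissible_nonzero: "admissible B \<kappa> \<Longrightarrow> y < n \<Longrightarrow> B y d False \<or> B y d True"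
  by (simp add: admissible_def)

lemma admissible_left_iff:
  "admissible B \<kappa> \<Longrightarrow> i < n \<Longrightarrow> B i False False \<and> B i False True \<longleftrightarrow> \<kappa> \<le> lcap i"
  by (simp add: admissible_def)

lemma admissible_right_iff:
  "admissible B \<kappa> \<Longrightarrow> j < n \<Longrightarrow> B j True False \<and> B j True True \<longleftrightarrow> rcap j \<le> \<kappa>"
  by (simp add: admissible_def)

lemma admissible_differ:
  "admissible B \<kappa> \<Longrightarrow> y < n \<Longrightarrow> \<not> (B y d False \<and> B y d True) \<Longrightarrow> B y d False \<noteq> B y d True"
  using admissible_nonzero by blast

lemma admissible_column: "admissible B \<kappa> \<Longrightarrow> \<exists>y<n. B y d z"
  by (simp add: admissible_def)

lemma admissible_level: "admissible B \<kappa> \<Longrightarrow> \<kappa> \<in> lcap ` {..<n} \<union> rcap ` {..<n}"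
  by (simp add: admissible_def)

lemma good_coord_max_pair_iff:
  assumes v: "v \<in> Hpoly n \<gamma>" and good: "good v" and y: "y < n"
  shows "signature v y d False \<and> signature v y d True \<longleftrightarrow>
    coord_max v d False + coord_max v d True \<le> pair_bound d y"
proof
  assume "signature v y d False \<and> signature v y d True"
  then show "coord_max v d False + coord_max v d True \<le> pair_bound d y"
    using pair_le[OF v y, of d] by (simp add: signature_def)
next
  assume le: "coord_max v d False + coord_max v d True \<le> pair_bound d y"
  show "signature v y d False \<and> signature v y d True"
  proof (rule ccontr)
    assume "\<not> (signature v y d False \<and> signature v y d True)"
    then obtain z where off: "\<not> signature v y d z" by blast
    then have "pair_tight v d y" "signature v y d (\<not> z)" using good y by (auto simp: good_def)
    moreover have "coord v d z y < coord_max v d z"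
      using off coord_le_max[OF y, of v d z] y by (simp add: signature_def)
    ultimately show False using le pair_tight_sum[of v d y z]
      by (cases z) (auto simp: signature_def)
  qed
qed

lemma good_coord_max_True:
  "good v \<Longrightarrow> coord_max v True z = - coord_max v False (\<not> z)"
  by (cases z) (auto simp: good_def balanced_def dest: spec[of _ False] spec[of _ True])

lemma admissible_signature:
  assumes v: "v \<in> Hpoly n \<gamma>" and good: "good v"
  shows "admissible (signature v) (coord_max v False False + coord_max v False True)"
  unfolding admissible_def
proof (intro conjI allI impI)
  fix y d assume "y < n"
  then have "signature v y d False \<or> pair_tight v d y \<and> signature v y d (\<not> False)"
    using good unfolding good_def by blast
  then show "signature v y d False \<or> signature v y d True" by auto
next
  fix i assume "i < n"
  then show "signature v i False False \<and> signature v i False True \<longleftrightarrow>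
      coord_max v False False + coord_max v False True \<le> lcap i"
    using good_coord_max_pair_iff[OF v good, of i False] by (simp add: pair_bound_def)
next
  fix j assume "j < n"
  then show "signature v j True False \<and> signature v j True True \<longleftrightarrow>
      rcap j \<le> coord_max v False False + coord_max v False True"
    using good_coord_max_pair_iff[OF v good, of j True] good_coord_max_True[OF good]
    by (auto simp: pair_bound_def)
next
  fix d z show "\<exists>y<n. signature v y d z"
    using signature_exists signature_lt by blast
next
  obtain y d where "y < n" "pair_tight v d y" "signature v y d False" "signature v y d True"
    using good by (auto simp: good_def)
  moreover from this
  have "coord_max v False False + coord_max v False True = (if d then rcap y else lcap y)"
    using good_coord_max_True[OF good, of False] good_coord_max_True[OF good, of True]
    by (cases d) (auto simp: pair_tight_def pair_bound_def signature_def)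
  ultimately show "coord_max v False False + coord_max v False True \<in> lcap ` {..<n} \<union> rcap ` {..<n}"
    by (cases d) auto
qed

lemma admissible_le_lcap: "admissible B \<kappa>' \<Longrightarrow> i < n \<Longrightarrow> admissible B (lcap i) \<Longrightarrow> \<kappa>' \<le> lcap i"
  by (simp add: admissible_def)

lemma admissible_rcap_le: "admissible B \<kappa>' \<Longrightarrow> j < n \<Longrightarrow> admissible B (rcap j) \<Longrightarrow> rcap j \<le> \<kappa>'"
  by (simp add: admissible_def)

lemma admissible_unique:
  assumes "admissible B \<kappa>" "admissible B \<kappa>'"
  shows "\<kappa> = \<kappa>'"
proof -
  have le: "\<kappa> \<le> \<kappa>'" if "admissible B \<kappa>" "admissible B \<kappa>'" for \<kappa> \<kappa>'
  proof -
    have "\<kappa> \<in> lcap ` {..<n} \<union> rcap ` {..<n}" "\<kappa>' \<in> lcap ` {..<n} \<union> rcap ` {..<n}"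
      using that by (simp_all add: admissible_def)
    then show ?thesis
      using that admissible_le_lcap[of B \<kappa>] admissible_rcap_le[of B \<kappa>'] lcap_le_rcap by blast
  qed
  show ?thesis using le[OF assms] le[OF assms(2,1)] by simp
qed

definition peak :: "real \<Rightarrow> bool \<Rightarrow> bool \<Rightarrow> real" where
  "peak \<kappa> d z = (if d = z then 0 else if d then - \<kappa> else \<kappa>)"

text \<open>The vertex with signature B and level \<kappa> normalised by coord_max False False = 0.\<close>

definition vertex_of :: "array \<Rightarrow> real \<Rightarrow> vec" where
  "vertex_of B \<kappa> y d z =
     (if B y d z then peak \<kappa> d z else pair_bound d y - peak \<kappa> d (\<not> z)) - (if d then - \<gamma> y else \<gamma> y)"

lemma coord_vertex_of:
  "coord (vertex_of B \<kappa>) d z y = (if B y d z then peak \<kappa> d z else pair_bound d y - peak \<kappa> d (\<not> z))"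
  by (simp add: coord_def vertex_of_def)

lemma admissible_both_iff:
  "admissible B \<kappa> \<Longrightarrow> y < n \<Longrightarrow>
    B y d False \<and> B y d True \<longleftrightarrow> peak \<kappa> d False + peak \<kappa> d True \<le> pair_bound d y"
  by (cases d) (auto simp: admissible_def peak_def pair_bound_def)

context
  fixes B \<kappa> assumes admissible: "admissible B \<kappa>"
begin

lemma coord_vertex_of_less_peak:
  assumes "y < n" "\<not> B y d z"
  shows "coord (vertex_of B \<kappa>) d z y < peak \<kappa> d z"
proof -
  have "B y d (\<not> z)" using admissible_nonzero[OF admissible \<open>y < n\<close>, of d] assms(2) by (cases z) auto
  moreover have "pair_bound d y < peak \<kappa> d False + peak \<kappa> d True"
    using admissible_both_iff[OF admissible \<open>y < n\<close>, of d] assms(2) by (cases z) auto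
  ultimately show ?thesis using assms(2) by (cases z) (auto simp: coord_vertex_of)
qed

lemma coord_vertex_of_le_peak: "y < n \<Longrightarrow> coord (vertex_of B \<kappa>) d z y \<le> peak \<kappa> d z"
  using coord_vertex_of_less_peak[of y d z] by (cases "B y d z") (auto simp: coord_vertex_of)

lemma coord_max_vertex_of: "coord_max (vertex_of B \<kappa>) d z = peak \<kappa> d z"
  unfolding coord_max_def
proof (rule Max_eqI)
  fix c assume "c \<in> coord (vertex_of B \<kappa>) d z ` {..<n}"
  then show "c \<le> peak \<kappa> d z" using coord_vertex_of_le_peak by auto
next
  obtain y where "y < n" "B y d z" using admissible_column[OF admissible] by blast
  then show "peak \<kappa> d z \<in> coord (vertex_of B \<kappa>) d z ` {..<n}"
    by (auto simp: coord_vertex_of intro!: image_eqI[of _ _ y])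
qed simp

lemma signature_vertex_of_iff: "y < n \<Longrightarrow> signature (vertex_of B \<kappa>) y d z \<longleftrightarrow> B y d z"
  using coord_vertex_of_less_peak[of y d z]
  by (auto simp: signature_def coord_max_vertex_of coord_vertex_of)

lemma signature_vertex_of:
  assumes "B \<in> arrays n"
  shows "signature (vertex_of B \<kappa>) = B"
proof (intro ext)
  fix y d z
  show "signature (vertex_of B \<kappa>) y d z = B y d z"
  proof (cases "y < n")
    case False
    then show ?thesis using assms by (simp add: arrays_def signature_def)
  qed (rule signature_vertex_of_iff)
qed

lemma pair_tight_vertex_of: "y < n \<Longrightarrow> \<not> B y d z \<Longrightarrow> pair_tight (vertex_of B \<kappa>) d y"
  using admissible_nonzero[OF admissible, of y d]
  by (cases z) (auto simp: pair_tight_def coord_vertex_of)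

lemma vertex_of_Hpoly: "vertex_of B \<kappa> \<in> Hpoly n \<gamma>"
proof (rule HpolyI)
  fix y d assume y: "y < n"
  show "coord (vertex_of B \<kappa>) d False y + coord (vertex_of B \<kappa>) d True y \<le> pair_bound d y"
  proof (cases "B y d False \<and> B y d True")
    case True
    then show ?thesis using admissible_both_iff[OF admissible y, of d] by (simp add: coord_vertex_of)
  next
    case False
    then show ?thesis using pair_tight_vertex_of[OF y] by (auto simp: pair_tight_def)
  qed
qed (simp add: coord_max_vertex_of peak_def)

lemma good_vertex_of: "good (vertex_of B \<kappa>)"
  unfolding good_def
proof (intro conjI allI impI)
  show "balanced (vertex_of B \<kappa>) z" for z
    by (simp add: balanced_def coord_max_vertex_of peak_def)
next
  fix y d z assume y: "y < n"
  show "signature (vertex_of B \<kappa>) y d z \<or>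
      pair_tight (vertex_of B \<kappa>) d y \<and> signature (vertex_of B \<kappa>) y d (\<not> z)"
    using admissible_nonzero[OF admissible y, of d] pair_tight_vertex_of[OF y, of d z]
    by (cases z) (auto simp: signature_vertex_of_iff[OF y])
next
  obtain y d where y: "y < n" and level: "\<kappa> = (if d then rcap y else lcap y)"
    using admissible_level[OF admissible] by (metis UnE imageE lessThan_iff)
  then have both: "B y d False \<and> B y d True"
    using admissible_both_iff[OF admissible y, of d] by (cases d) (simp_all add: peak_def pair_bound_def)
  moreover have "pair_tight (vertex_of B \<kappa>) d y"
    using both level by (cases d) (simp_all add: pair_tight_def coord_vertex_of peak_def pair_bound_def)
  ultimately show "\<exists>y<n. \<exists>d. pair_tight (vertex_of B \<kappa>) d y \<and>
      signature (vertex_of B \<kappa>) y d False \<and> signature (vertex_of B \<kappa>) y d True"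
    using y signature_vertex_of_iff[OF y] by blast
qed

end

lemma S1_admissible:
  assumes "B \<in> S1 n"
  shows "\<exists>\<kappa>. admissible B \<kappa>"
proof -
  obtain t where t: "t + 2 \<le> n"
    and high: "\<And>i. t \<le> i \<Longrightarrow> i < n \<Longrightarrow> B i False False \<and> B i False True"
    and low: "\<And>i. i < t \<Longrightarrow> B i False False \<noteq> B i False True"
    and right: "\<And>j. j < n \<Longrightarrow> B j True False \<noteq> B j True True"
    and columns: "\<exists>i<n. \<exists>j<n. B i True False \<and> B j True True"
    using assms unfolding S1_def by blast
  have t': "t < n - 1" "n - 1 < n" using t by simp_all
  have "admissible B (lcap t)" unfolding admissible_def
  proof (intro conjI allI impI)
    fix y d assume "y < n"
    then show "B y d False \<or> B y d True" using high low right by (cases d; cases "t \<le> y") auto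
  next
    fix i assume "i < n"
    then show "B i False False \<and> B i False True \<longleftrightarrow> lcap t \<le> lcap i"
      using high low lcap_le_iff[of t i] t by (cases "t \<le> i") auto
  next
    fix j assume "j < n"
    then show "B j True False \<and> B j True True \<longleftrightarrow> rcap j \<le> lcap t"
      using right lcap_less_rcap[OF t'(1), of j] by auto
  next
    fix d z show "\<exists>y<n. B y d z"
    proof (cases d)
      case False
      then show ?thesis using high[of "n - 1"] t' by (intro exI[of _ "n - 1"]) (cases z; auto)
    qed (use columns in \<open>cases z; auto\<close>)
  next
    show "lcap t \<in> lcap ` {..<n} \<union> rcap ` {..<n}" using t by auto
  qed
  then show ?thesis ..
qed

lemma S2_admissible:
  assumes "B \<in> S2 n"
  shows "admissible B (lcap (n - 1))"
proof -
  have corners: "B (n - 1) False False" "B (n - 1) False True" "B 0 True False" "B 0 True True"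
    and left: "\<And>i. i < n - 1 \<Longrightarrow> B i False False \<noteq> B i False True"
    and right: "\<And>j. 0 < j \<Longrightarrow> j < n \<Longrightarrow> B j True False \<noteq> B j True True"
    using assms unfolding S2_def by blast+
  have last: "n - 1 < n" using n_pos by simp
  show ?thesis unfolding admissible_def
  proof (intro conjI allI impI)
    fix y d assume "y < n"
    then show "B y d False \<or> B y d True"
      using corners left right by (cases d; cases "y = n - 1"; cases "y = 0") auto
  next
    fix i assume "i < n"
    then show "B i False False \<and> B i False True \<longleftrightarrow> lcap (n - 1) \<le> lcap i"
      using corners left lcap_le_iff[OF last, of i] by (cases "i = n - 1") auto
  next
    fix j assume "j < n"
    then show "B j True False \<and> B j True True \<longleftrightarrow> rcap j \<le> lcap (n - 1)"
      using corners right rcap_le_iff[of j 0] lcap_last n_pos by (cases "j = 0") auto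
  next
    fix d z show "\<exists>y<n. B y d z"
      using corners last n_pos by (intro exI[of _ "if d then 0 else n - 1"]) (cases d; cases z; simp)
  next
    show "lcap (n - 1) \<in> lcap ` {..<n} \<union> rcap ` {..<n}" using last by blast
  qed
qed

lemma S3_admissible:
  assumes "B \<in> S3 n"
  shows "\<exists>\<kappa>. admissible B \<kappa>"
proof -
  obtain t where t: "1 \<le> t" "t + 1 \<le> n"
    and low: "\<And>j. j \<le> t \<Longrightarrow> B j True False \<and> B j True True"
    and high: "\<And>j. t < j \<Longrightarrow> j < n \<Longrightarrow> B j True False \<noteq> B j True True"
    and left: "\<And>i. i < n \<Longrightarrow> B i False False \<noteq> B i False True"
    and columns: "\<exists>i<n. \<exists>j<n. B i False False \<and> B j False True"
    using assms unfolding S3_def by blast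
  have "admissible B (rcap t)" unfolding admissible_def
  proof (intro conjI allI impI)
    fix y d assume "y < n"
    then show "B y d False \<or> B y d True" using low high left by (cases d; cases "y \<le> t") auto
  next
    fix i assume "i < n"
    then show "B i False False \<and> B i False True \<longleftrightarrow> rcap t \<le> lcap i"
      using left lcap_less_rcap_pos[of i t] t by auto
  next
    fix j assume "j < n"
    then show "B j True False \<and> B j True True \<longleftrightarrow> rcap j \<le> rcap t"
      using low high rcap_le_iff[of j t] t by (cases "j \<le> t") auto
  next
    fix d z show "\<exists>y<n. B y d z"
    proof (cases d)
      case True
      then show ?thesis using low[of 0] n_pos by (intro exI[of _ 0]) (cases z; auto)
    qed (use columns in \<open>cases z; auto\<close>)
  next
    show "rcap t \<in> lcap ` {..<n} \<union> rcap ` {..<n}" using t by auto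
  qed
  then show ?thesis ..
qed

lemma admissible_S1:
  assumes adm: "admissible B (lcap t)" and t: "t < n - 1" and "B \<in> arrays n"
  shows "B \<in> S1 n"
  unfolding S1_def
proof (intro CollectI conjI \<open>B \<in> arrays n\<close>, rule exI[of _ t], intro conjI allI impI)
  show "t + 2 \<le> n" using t by simp
next
  fix i assume "t \<le> i \<and> i < n"
  then show "B i False False" "B i False True"
    using admissible_left_iff[OF adm, of i] lcap_le_iff[of t i] t by auto
next
  fix i assume "i < t"
  then show "B i False False \<noteq> B i False True"
    using admissible_differ[OF adm, of i False] admissible_left_iff[OF adm, of i] lcap_le_iff[of t i] t
    by auto
next
  fix j assume "j < n"
  then show "B j True False \<noteq> B j True True"
    using admissible_differ[OF adm, of j True] admissible_right_iff[OF adm, of j]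
      lcap_less_rcap[OF t, of j]
    by auto
next
  show "\<exists>i<n. \<exists>j<n. B i True False \<and> B j True True"
    using admissible_column[OF adm, of True] by blast
qed

lemma admissible_S2:
  assumes adm: "admissible B (lcap (n - 1))" and "B \<in> arrays n"
  shows "B \<in> S2 n"
  unfolding S2_def
proof (intro CollectI conjI \<open>B \<in> arrays n\<close> allI impI)
  have last: "n - 1 < n" using n_pos by simp
  show "B (n - 1) False False" "B (n - 1) False True"
    using admissible_left_iff[OF adm last] by simp_all
  show "B 0 True False" "B 0 True True"
    using admissible_right_iff[OF adm n_pos] lcap_last by simp_all
next
  fix i assume "i < n - 1"
  then show "B i False False \<noteq> B i False True"
    using admissible_differ[OF adm, of i False] admissible_left_iff[OF adm, of i] lcap_le_iff[of "n - 1" i]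
    by auto
next
  fix j assume "0 < j \<and> j < n"
  then show "B j True False \<noteq> B j True True"
    using admissible_differ[OF adm, of j True] admissible_right_iff[OF adm, of j]
      lcap_less_rcap_pos[of "n - 1" j] n_pos
    by auto
qed

lemma admissible_S3:
  assumes adm: "admissible B (rcap t)" and t: "0 < t" "t < n" and "B \<in> arrays n"
  shows "B \<in> S3 n"
  unfolding S3_def
proof (intro CollectI conjI \<open>B \<in> arrays n\<close>, rule exI[of _ t], intro conjI allI impI)
  show "1 \<le> t" "t + 1 \<le> n" using t by simp_all
next
  fix j assume "j \<le> t"
  then show "B j True False" "B j True True"
    using admissible_right_iff[OF adm, of j] rcap_le_iff[of j t] t by auto
next
  fix j assume "t < j \<and> j < n"
  then show "B j True False \<noteq> B j True True"
    using admissible_differ[OF adm, of j True] admissible_right_iff[OF adm, of j] rcap_le_iff[of j t] t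
    by auto
next
  fix i assume "i < n"
  then show "B i False False \<noteq> B i False True"
    using admissible_differ[OF adm, of i False] admissible_left_iff[OF adm, of i]
      lcap_less_rcap_pos[of i t] t
    by auto
next
  show "\<exists>i<n. \<exists>j<n. B i False False \<and> B j False True"
    using admissible_column[OF adm, of False] by blast
qed

lemma Ssig_iff_admissible: "B \<in> Ssig n \<longleftrightarrow> B \<in> arrays n \<and> (\<exists>\<kappa>. admissible B \<kappa>)"
proof
  assume B: "B \<in> Ssig n"
  then have "B \<in> arrays n" by (auto simp: Ssig_def S1_def S2_def S3_def)
  moreover have "\<exists>\<kappa>. admissible B \<kappa>"
    using B S1_admissible S2_admissible S3_admissible by (auto simp: Ssig_def)
  ultimately show "B \<in> arrays n \<and> (\<exists>\<kappa>. admissible B \<kappa>)" ..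
next
  assume "B \<in> arrays n \<and> (\<exists>\<kappa>. admissible B \<kappa>)"
  then obtain \<kappa> where arr: "B \<in> arrays n" and adm: "admissible B \<kappa>" by blast
  from admissible_level[OF adm] show "B \<in> Ssig n"
  proof (elim UnE imageE)
    fix t assume \<kappa>: "\<kappa> = lcap t" and "t \<in> {..<n}"
    show "B \<in> Ssig n"
    proof (cases "t = n - 1")
      case True
      then have "B \<in> S2 n" using admissible_S2[OF _ arr] adm \<kappa> by simp
      then show ?thesis by (simp add: Ssig_def)
    next
      case False
      then have "t < n - 1" using \<open>t \<in> {..<n}\<close> by simp
      then have "B \<in> S1 n" using admissible_S1[OF _ _ arr] adm \<kappa> by simp
      then show ?thesis by (simp add: Ssig_def)
    qed
  next
    fix t assume \<kappa>: "\<kappa> = rcap t" and "t \<in> {..<n}"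
    show "B \<in> Ssig n"
    proof (cases "t = 0")
      case True
      then have "B \<in> S2 n" using admissible_S2[OF _ arr] adm \<kappa> lcap_last by simp
      then show ?thesis by (simp add: Ssig_def)
    next
      case False
      then have "B \<in> S3 n" using admissible_S3[OF _ _ _ arr] adm \<kappa> \<open>t \<in> {..<n}\<close> by simp
      then show ?thesis by (simp add: Ssig_def)
    qed
  qed
qed

lemma good_coord:
  assumes good: "good v" and y: "y < n"
  shows "coord v d z y =
    (if signature v y d z then coord_max v d z else pair_bound d y - coord_max v d (\<not> z))"
proof (cases "signature v y d z")
  case False
  then have "pair_tight v d y" "signature v y d (\<not> z)" using good y by (auto simp: good_def)
  then show ?thesis using False pair_tight_sum[of v d y z] by (simp add: signature_def)
qed (simp add: signature_def)

lemma signature_eq_imp_Mvec_eq: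
  assumes v1: "v1 \<in> Hpoly n \<gamma>" "good v1" and v2: "v2 \<in> Hpoly n \<gamma>" "good v2"
    and signature: "signature v1 = signature v2"
  shows "Mvec n v1 = Mvec n v2"
proof -
  have level: "coord_max v1 False False + coord_max v1 False True =
      coord_max v2 False False + coord_max v2 False True"
    using admissible_unique admissible_signature[OF v1] admissible_signature[OF v2] signature by metis
  define t where "t = coord_max v1 False False - coord_max v2 False False"
  have max_shift: "coord_max v1 d z = coord_max v2 d z + (if z then - t else t)" for d z
    using level good_coord_max_True[OF v1(2)] good_coord_max_True[OF v2(2)]
    by (cases d; cases z) (auto simp: t_def)
  have "v1 y d z = v2 y d z + (if z then - t else t)" if "y < n" for y d z
  proof -
    have "coord v1 d z y = coord v2 d z y + (if z then - t else t)"
      using good_coord[OF v1(2) that, of d z] good_coord[OF v2(2) that, of d z]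
        max_shift[of d z] max_shift[of d "\<not> z"] signature
      by (cases z) auto
    then show ?thesis by (simp add: coord_def split: if_splits)
  qed
  then show ?thesis unfolding Mvec_eq_iff_shift by blast
qed

lemma Mvec_eq_imp_signature_eq:
  assumes "Mvec n v1 = Mvec n v2"
  shows "signature v1 = signature v2"
proof -
  obtain t where "\<forall>y<n. \<forall>d z. v1 y d z = v2 y d z + (if z then - t else t)"
    using assms unfolding Mvec_eq_iff_shift by blast
  then have coord_shift: "coord v1 d z y = coord v2 d z y + (if z then - t else t)" if "y < n" for y d z
    using that by (simp add: coord_def)
  have max_shift: "coord_max v1 d z = coord_max v2 d z + c"
    if "\<And>y. y < n \<Longrightarrow> coord v1 d z y = coord v2 d z y + c" for d z c
  proof -
    have "coord v1 d z ` {..<n} = (\<lambda>y. coord v2 d z y + c) ` {..<n}"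
      using that by simp
    moreover have "{..<n} \<noteq> {}" using n_pos by auto
    ultimately show ?thesis
      using Max_add_commute[of "{..<n}" "coord v2 d z" c] by (simp add: coord_max_def)
  qed
  have "coord_max v1 d z = coord_max v2 d z + (if z then - t else t)" for d z
    by (rule max_shift) (rule coord_shift)
  then show ?thesis
    using coord_shift by (auto simp: fun_eq_iff signature_def)
qed

lemma signature_vertices: "signature ` {v. is_vertex n \<gamma> v} = Ssig n"
proof
  show "signature ` {v. is_vertex n \<gamma> v} \<subseteq> Ssig n"
  proof
    fix B assume "B \<in> signature ` {v. is_vertex n \<gamma> v}"
    then obtain v where "is_vertex n \<gamma> v" and B: "B = signature v" by blast
    then have "v \<in> Hpoly n \<gamma>" "good v" by (simp_all add: vertex_iff_good)
    then have "admissible B (coord_max v False False + coord_max v False True)"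
      unfolding B by (rule admissible_signature)
    moreover have "B \<in> arrays n" using B by (simp add: arrays_def signature_def)
    ultimately show "B \<in> Ssig n" using Ssig_iff_admissible by blast
  qed
  show "Ssig n \<subseteq> signature ` {v. is_vertex n \<gamma> v}"
  proof
    fix B assume "B \<in> Ssig n"
    then obtain \<kappa> where arr: "B \<in> arrays n" and adm: "admissible B \<kappa>"
      using Ssig_iff_admissible by blast
    have "is_vertex n \<gamma> (vertex_of B \<kappa>)"
      using vertex_of_Hpoly[OF adm] good_vertex_of[OF adm] by (simp add: vertex_iff_good)
    moreover have "signature (vertex_of B \<kappa>) = B" using adm arr by (rule signature_vertex_of)
    ultimately show "B \<in> signature ` {v. is_vertex n \<gamma> v}" by (metis image_eqI mem_Collect_eq)
  qed
qed

theorem card_vertex_classes: "card (Mvec n ` {v. is_vertex n \<gamma> v}) = card (Ssig n)"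
proof -
  have "Mvec n v1 = Mvec n v2 \<longleftrightarrow> signature v1 = signature v2"
    if "v1 \<in> {v. is_vertex n \<gamma> v}" "v2 \<in> {v. is_vertex n \<gamma> v}" for v1 v2
  proof
    assume "Mvec n v1 = Mvec n v2"
    then show "signature v1 = signature v2" by (rule Mvec_eq_imp_signature_eq)
  next
    assume "signature v1 = signature v2"
    moreover have "v1 \<in> Hpoly n \<gamma>" "good v1" "v2 \<in> Hpoly n \<gamma>" "good v2"
      using that by (simp_all add: vertex_iff_good)
    ultimately show "Mvec n v1 = Mvec n v2" by (intro signature_eq_imp_Mvec_eq)
  qed
  then have "card (Mvec n ` {v. is_vertex n \<gamma> v}) = card (signature ` {v. is_vertex n \<gamma> v})"
    by (rule card_image_eq_if_same_fibres)
  then show ?thesis by (simp add: signature_vertices)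
qed

end

section \<open>Counting admissible signatures\<close>

definition array_box :: "nat \<Rightarrow> (nat \<Rightarrow> (bool \<times> bool) set) \<Rightarrow> (nat \<Rightarrow> (bool \<times> bool) set) \<Rightarrow> array set" where
  "array_box n L R = {B \<in> arrays n. \<forall>y<n.
     (B y False False, B y False True) \<in> L y \<and> (B y True False, B y True True) \<in> R y}"

definition array_of_pairs :: "nat \<Rightarrow> (nat \<Rightarrow> (bool \<times> bool) \<times> (bool \<times> bool)) \<Rightarrow> array" where
  "array_of_pairs n f y d z \<longleftrightarrow> y < n \<and> (if d then (if z then snd (snd (f y)) else fst (snd (f y)))
     else (if z then snd (fst (f y)) else fst (fst (f y))))"

lemma bij_betw_array_box:
  "bij_betw (\<lambda>B. \<lambda>y\<in>{..<n}. ((B y False False, B y False True), (B y True False, B y True True)))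
     (array_box n L R) (Pi\<^sub>E {..<n} (\<lambda>y. L y \<times> R y))"
  (is "bij_betw ?pairs _ _")
proof (rule bij_betw_byWitness[where f' = "array_of_pairs n"])
  show "\<forall>B\<in>array_box n L R. array_of_pairs n (?pairs B) = B"
  proof (intro ballI ext)
    fix B y d z assume "B \<in> array_box n L R"
    then show "array_of_pairs n (?pairs B) y d z = B y d z"
      by (cases "y < n"; cases d; cases z) (simp_all add: array_of_pairs_def array_box_def arrays_def)
  qed
  show "\<forall>f\<in>Pi\<^sub>E {..<n} (\<lambda>y. L y \<times> R y). ?pairs (array_of_pairs n f) = f"
  proof (intro ballI ext)
    fix f y assume f: "f \<in> Pi\<^sub>E {..<n} (\<lambda>y. L y \<times> R y)"
    show "?pairs (array_of_pairs n f) y = f y"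
      using PiE_arb[OF f, of y] by (cases "y < n") (simp_all add: array_of_pairs_def)
  qed
  show "?pairs ` array_box n L R \<subseteq> Pi\<^sub>E {..<n} (\<lambda>y. L y \<times> R y)"
  proof
    fix x assume "x \<in> ?pairs ` array_box n L R"
    then obtain B where B: "B \<in> array_box n L R" and x: "x = ?pairs B" by blast
    show "x \<in> Pi\<^sub>E {..<n} (\<lambda>y. L y \<times> R y)"
      unfolding x restrict_PiE_iff using B by (simp add: array_box_def)
  qed
  show "array_of_pairs n ` Pi\<^sub>E {..<n} (\<lambda>y. L y \<times> R y) \<subseteq> array_box n L R"
  proof clarify
    fix f assume f: "f \<in> Pi\<^sub>E {..<n} (\<lambda>y. L y \<times> R y)"
    have "fst (f y) \<in> L y" "snd (f y) \<in> R y" if "y < n" for y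
      using PiE_mem[OF f, of y] that by (auto simp: mem_Times_iff)
    then show "array_of_pairs n f \<in> array_box n L R"
      by (simp add: array_box_def arrays_def array_of_pairs_def)
  qed
qed

lemma finite_array_box: "finite (array_box n L R)"
  using bij_betw_finite[OF bij_betw_array_box] by (simp add: finite_PiE)

lemma card_array_box: "card (array_box n L R) = (\<Prod>y<n. card (L y) * card (R y))"
  using bij_betw_same_card[OF bij_betw_array_box] by (simp add: card_PiE card_cartesian_product)

definition one_hot :: "(bool \<times> bool) set" where
  "one_hot = {(True, False), (False, True)}"

definition pattern :: "bool \<Rightarrow> (bool \<times> bool) set" where
  "pattern free = (if free then one_hot else {(True, True)})"

lemma one_hot_iff: "(a, b) \<in> one_hot \<longleftrightarrow> a \<noteq> b"
  by (auto simp: one_hot_def)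

lemma pattern_iff: "(a, b) \<in> pattern free \<longleftrightarrow> (if free then a \<noteq> b else a \<and> b)"
  by (auto simp: pattern_def one_hot_def)

lemma card_one_hot: "card one_hot = 2"
  by (simp add: one_hot_def)

lemma prod_card_pattern:
  assumes "finite A"
  shows "(\<Prod>y\<in>A. card (pattern (P y))) = 2 ^ card {y \<in> A. P y}"
proof -
  have "(\<Prod>y\<in>A. card (pattern (P y))) = (\<Prod>y\<in>A. if P y then 2 else 1)"
    by (intro prod.cong) (simp_all add: pattern_def card_one_hot)
  also have "\<dots> = (\<Prod>y\<in>{y \<in> A. P y}. 2)"
    using assms by (rule prod.inter_filter[symmetric])
  finally show ?thesis by simp
qed

definition mixed_box :: "nat \<Rightarrow> (nat \<Rightarrow> (bool \<times> bool) set) \<Rightarrow> array set" where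
  "mixed_box n L = array_box n L (\<lambda>_. one_hot) -
    (array_box n L (\<lambda>_. {(True, False)}) \<union> array_box n L (\<lambda>_. {(False, True)}))"

lemma card_diff_two_disjoint:
  assumes "finite A" "B1 \<subseteq> A" "B2 \<subseteq> A" "B1 \<inter> B2 = {}"
  shows "card (A - (B1 \<union> B2)) = card A - card B1 - card B2"
  using assms by (simp add: card_Diff_subset card_Un_disjoint finite_subset)

lemma card_mixed_box:
  assumes "0 < n"
  shows "card (mixed_box n L) = (\<Prod>y<n. card (L y)) * (2 ^ n - 2)"
proof -
  have "card (array_box n L (\<lambda>_. one_hot)) = (\<Prod>y<n. card (L y)) * 2 ^ n"
    by (simp add: card_array_box prod.distrib card_one_hot)
  moreover have "card (array_box n L (\<lambda>_. {p})) = (\<Prod>y<n. card (L y))" for p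
    by (simp add: card_array_box)
  moreover have "array_box n L (\<lambda>_. {p}) \<subseteq> array_box n L (\<lambda>_. one_hot)" if "p \<in> one_hot" for p
    using that by (auto simp: array_box_def)
  moreover have "array_box n L (\<lambda>_. {(True, False)}) \<inter> array_box n L (\<lambda>_. {(False, True)}) = {}"
    using assms by (auto simp: array_box_def)
  ultimately show ?thesis
    unfolding mixed_box_def
    by (simp add: card_diff_two_disjoint finite_array_box one_hot_def diff_mult_distrib2)
qed

lemma finite_arrays: "finite (arrays n)"
proof -
  have "arrays n = array_box n (\<lambda>_. UNIV) (\<lambda>_. UNIV)" by (simp add: array_box_def)
  then show ?thesis by (simp add: finite_array_box)
qed

lemma Ssig_parts_subset_arrays: "S1 n \<subseteq> arrays n" "S2 n \<subseteq> arrays n" "S3 n \<subseteq> arrays n"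
  unfolding S1_def S2_def S3_def by (rule Collect_restrict)+

definition S1_slice :: "nat \<Rightarrow> nat \<Rightarrow> array set" where
  "S1_slice n t = {B \<in> arrays n.
      (\<forall>i. t \<le> i \<and> i < n \<longrightarrow> B i False False \<and> B i False True) \<and>
      (\<forall>i<t. B i False False \<noteq> B i False True) \<and>
      (\<forall>i<n. B i True False \<noteq> B i True True) \<and>
      (\<exists>i<n. \<exists>j<n. B i True False \<and> B j True True)}"

lemma S1_slice_subset: "S1_slice n t \<subseteq> arrays n"
  unfolding S1_slice_def by (rule Collect_restrict)

lemma S1_eq_UN: "S1 n = (\<Union>t<n - 1. S1_slice n t)"
proof (intro set_eqI iffI)
  fix B assume "B \<in> S1 n"
  then obtain t where "t + 2 \<le> n" "B \<in> S1_slice n t" unfolding S1_def S1_slice_def by blast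
  then show "B \<in> (\<Union>t<n - 1. S1_slice n t)" by (intro UN_I[of t]) auto
next
  fix B assume "B \<in> (\<Union>t<n - 1. S1_slice n t)"
  then obtain t where "t < n - 1" "B \<in> S1_slice n t" by blast
  moreover from this have "t + 2 \<le> n" by simp
  ultimately show "B \<in> S1 n" unfolding S1_def S1_slice_def by blast
qed

lemma S1_slices_disjoint:
  assumes "s \<noteq> t" "s < n" "t < n"
  shows "S1_slice n s \<inter> S1_slice n t = {}"
proof -
  have False if "B \<in> S1_slice n s" "B \<in> S1_slice n t" "s < t" "t < n" for B s t
  proof -
    have "\<forall>i. s \<le> i \<and> i < n \<longrightarrow> B i False False \<and> B i False True"
      "\<forall>i<t. B i False False \<noteq> B i False True"
      using that(1,2) by (simp_all add: S1_slice_def)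
    then show False using that(3,4) by (meson order_refl order.strict_trans)
  qed
  from this[of _ s t] this[of _ t s] show ?thesis
    using assms by (cases "s < t") auto
qed

lemma S1_slice_subset_mixed_box: "S1_slice n t \<subseteq> mixed_box n (\<lambda>i. pattern (i < t))"
proof
  fix B assume B: "B \<in> S1_slice n t"
  have arr: "B \<in> arrays n"
    and high: "\<forall>i. t \<le> i \<and> i < n \<longrightarrow> B i False False \<and> B i False True"
    and low: "\<forall>i<t. B i False False \<noteq> B i False True"
    and right: "\<forall>i<n. B i True False \<noteq> B i True True"
    and columns: "\<exists>i<n. \<exists>j<n. B i True False \<and> B j True True"
    using B by (simp_all add: S1_slice_def)
  have "(B y False False, B y False True) \<in> pattern (y < t)" if "y < n" for y
    using high low that by (cases "y < t") (simp_all add: pattern_iff)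
  then have "B \<in> array_box n (\<lambda>i. pattern (i < t)) (\<lambda>_. one_hot)"
    using arr right by (simp add: array_box_def one_hot_iff)
  moreover have "B \<notin> array_box n L (\<lambda>_. {(True, False)})" "B \<notin> array_box n L (\<lambda>_. {(False, True)})"
    for L using columns by (auto simp: array_box_def)
  ultimately show "B \<in> mixed_box n (\<lambda>i. pattern (i < t))"
    by (simp add: mixed_box_def)
qed

lemma mixed_box_subset_S1_slice:
  assumes "t \<le> n"
  shows "mixed_box n (\<lambda>i. pattern (i < t)) \<subseteq> S1_slice n t"
proof
  fix B assume B: "B \<in> mixed_box n (\<lambda>i. pattern (i < t))"
  then have arr: "B \<in> arrays n"
    and left: "\<And>i. i < n \<Longrightarrow> (B i False False, B i False True) \<in> pattern (i < t)"
    and right: "\<And>j. j < n \<Longrightarrow> B j True False \<noteq> B j True True"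
    by (simp_all add: mixed_box_def array_box_def one_hot_iff)
  have not_constant: "\<exists>y<n. (B y True False, B y True True) \<noteq> p"
    if "B \<notin> array_box n (\<lambda>i. pattern (i < t)) (\<lambda>_. {p})" for p
    using that arr left by (auto simp: array_box_def)
  show "B \<in> S1_slice n t"
    unfolding S1_slice_def
  proof (intro CollectI conjI allI impI arr right)
    fix i assume "t \<le> i \<and> i < n"
    then show "B i False False" "B i False True" using left[of i] by (simp_all add: pattern_iff)
  next
    fix i assume "i < t"
    then show "B i False False \<noteq> B i False True" using left[of i] assms by (simp add: pattern_iff)
  next
    obtain i j where i: "i < n" "(B i True False, B i True True) \<noteq> (False, True)"
      and j: "j < n" "(B j True False, B j True True) \<noteq> (True, False)"
      using not_constant B unfolding mixed_box_def by blast
    then have "B i True False" "B j True True" using right[OF i(1)] right[OF j(1)] by auto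
    then show "\<exists>i<n. \<exists>j<n. B i True False \<and> B j True True"
      using i(1) j(1) by blast
  qed
qed

lemma card_S1_slice:
  assumes "0 < n" "t \<le> n"
  shows "card (S1_slice n t) = 2 ^ t * (2 ^ n - 2)"
proof -
  have "S1_slice n t = mixed_box n (\<lambda>i. pattern (i < t))"
    using S1_slice_subset_mixed_box mixed_box_subset_S1_slice[OF assms(2)] by (rule subset_antisym)
  moreover have "{y \<in> {..<n}. y < t} = {..<t}" using assms(2) by auto
  ultimately show ?thesis using assms(1) by (simp add: card_mixed_box prod_card_pattern)
qed

lemma card_S1:
  assumes "0 < n"
  shows "card (S1 n) = (2 ^ (n - 1) - 1) * (2 ^ n - 2)"
proof -
  have "card (S1 n) = (\<Sum>t<n - 1. card (S1_slice n t))"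
    unfolding S1_eq_UN
  proof (rule card_UN_disjoint)
    show "\<forall>t\<in>{..<n - 1}. finite (S1_slice n t)"
      using finite_subset[OF S1_slice_subset finite_arrays] by blast
    show "\<forall>s\<in>{..<n - 1}. \<forall>t\<in>{..<n - 1}. s \<noteq> t \<longrightarrow> S1_slice n s \<inter> S1_slice n t = {}"
      by (intro ballI impI S1_slices_disjoint) auto
  qed simp
  also have "\<dots> = (\<Sum>t<n - 1. 2 ^ t) * (2 ^ n - 2)"
    using assms by (simp add: card_S1_slice sum_distrib_right)
  finally show ?thesis using mask_eq_sum_exp_nat[of "n - 1"] by (simp add: lessThan_def)
qed

lemma S2_subset_box: "S2 n \<subseteq> array_box n (\<lambda>i. pattern (i < n - 1)) (\<lambda>j. pattern (0 < j))"
proof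
  fix B assume B: "B \<in> S2 n"
  have arr: "B \<in> arrays n"
    and corners: "B (n - 1) False False" "B (n - 1) False True" "B 0 True False" "B 0 True True"
    and left: "\<forall>i. i < n - 1 \<longrightarrow> B i False False \<noteq> B i False True"
    and right: "\<forall>j. 0 < j \<and> j < n \<longrightarrow> B j True False \<noteq> B j True True"
    using B by (simp_all add: S2_def)
  have "(B y False False, B y False True) \<in> pattern (y < n - 1)" if "y < n" for y
  proof (cases "y < n - 1")
    case False
    then have "y = n - 1" using that by simp
    then show ?thesis using corners by (simp add: pattern_iff)
  qed (use left in \<open>simp add: pattern_iff\<close>)
  moreover have "(B y True False, B y True True) \<in> pattern (0 < y)" if "y < n" for y
    using right corners that by (cases "0 < y") (simp_all add: pattern_iff)
  ultimately show "B \<in> array_box n (\<lambda>i. pattern (i < n - 1)) (\<lambda>j. pattern (0 < j))"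
    using arr by (simp add: array_box_def)
qed

lemma box_subset_S2:
  assumes "0 < n"
  shows "array_box n (\<lambda>i. pattern (i < n - 1)) (\<lambda>j. pattern (0 < j)) \<subseteq> S2 n"
proof
  fix B assume "B \<in> array_box n (\<lambda>i. pattern (i < n - 1)) (\<lambda>j. pattern (0 < j))"
  then have arr: "B \<in> arrays n"
    and left: "\<And>i. i < n \<Longrightarrow> (B i False False, B i False True) \<in> pattern (i < n - 1)"
    and right: "\<And>j. j < n \<Longrightarrow> (B j True False, B j True True) \<in> pattern (0 < j)"
    by (simp_all add: array_box_def)
  show "B \<in> S2 n" unfolding S2_def
  proof (intro CollectI conjI arr allI impI)
    show "B (n - 1) False False" "B (n - 1) False True"
      using left[of "n - 1"] assms by (simp_all add: pattern_iff)
    show "B 0 True False" "B 0 True True"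
      using right[of 0] assms by (simp_all add: pattern_iff)
  next
    fix i assume "i < n - 1"
    then show "B i False False \<noteq> B i False True" using left[of i] by (simp add: pattern_iff)
  next
    fix j assume "0 < j \<and> j < n"
    then show "B j True False \<noteq> B j True True" using right[of j] by (simp add: pattern_iff)
  qed
qed

lemma card_S2:
  assumes "0 < n"
  shows "card (S2 n) = 2 ^ (n - 1) * 2 ^ (n - 1)"
proof -
  have "S2 n = array_box n (\<lambda>i. pattern (i < n - 1)) (\<lambda>j. pattern (0 < j))"
    using S2_subset_box box_subset_S2[OF assms] by (rule subset_antisym)
  then have "card (S2 n) = 2 ^ card {y \<in> {..<n}. y < n - 1} * 2 ^ card {y \<in> {..<n}. 0 < y}"
    by (simp add: card_array_box prod.distrib prod_card_pattern)
  moreover have "{y \<in> {..<n}. y < n - 1} = {..<n - 1}" "{y \<in> {..<n}. 0 < y} = {1..<n}"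
    by auto
  ultimately show ?thesis by simp
qed

definition reflect :: "nat \<Rightarrow> array \<Rightarrow> array" where
  "reflect n B y d z \<longleftrightarrow> y < n \<and> B (n - 1 - y) (\<not> d) z"

lemma reflect_reflect:
  assumes "B \<in> arrays n"
  shows "reflect n (reflect n B) = B"
proof (intro ext)
  fix y d z
  show "reflect n (reflect n B) y d z = B y d z"
  proof (cases "y < n")
    case True
    then have "n - 1 - (n - 1 - y) = y" by simp
    with True show ?thesis by (simp add: reflect_def)
  next
    case False
    then show ?thesis using assms by (simp add: reflect_def arrays_def)
  qed
qed

lemma reflect_S1:
  assumes "B \<in> S1 n"
  shows "reflect n B \<in> S3 n"
proof -
  obtain t where t: "t + 2 \<le> n"
    and high: "\<forall>i. t \<le> i \<and> i < n \<longrightarrow> B i False False \<and> B i False True"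
    and low: "\<forall>i<t. B i False False \<noteq> B i False True"
    and right: "\<forall>i<n. B i True False \<noteq> B i True True"
    and columns: "\<exists>i<n. \<exists>j<n. B i True False \<and> B j True True"
    using assms by (auto simp: S1_def)
  show ?thesis unfolding S3_def
  proof (intro CollectI conjI, simp add: arrays_def reflect_def,
      rule exI[of _ "n - 1 - t"], intro conjI allI impI)
    show "1 \<le> n - 1 - t" "n - 1 - t + 1 \<le> n" using t by simp_all
  next
    fix i assume "i \<le> n - 1 - t"
    then have "t \<le> n - 1 - i \<and> n - 1 - i < n" "i < n" using t by auto
    then show "reflect n B i True False" "reflect n B i True True"
      using high by (simp_all add: reflect_def)
  next
    fix i assume "n - 1 - t < i \<and> i < n"
    then have "n - 1 - i < t" "i < n" by auto
    then show "reflect n B i True False \<noteq> reflect n B i True True"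
      using low by (simp add: reflect_def)
  next
    fix i assume "i < n"
    then show "reflect n B i False False \<noteq> reflect n B i False True"
      using right[rule_format, of "n - 1 - i"] by (simp add: reflect_def)
  next
    obtain i j where "i < n" "j < n" "B i True False" "B j True True" using columns by blast
    moreover from this have "n - 1 - (n - 1 - i) = i" "n - 1 - (n - 1 - j) = j" by simp_all
    ultimately show "\<exists>i<n. \<exists>j<n. reflect n B i False False \<and> reflect n B j False True"
      by (intro exI[of _ "n - 1 - i"] conjI exI[of _ "n - 1 - j"]) (simp_all add: reflect_def)
  qed
qed

lemma reflect_S3:
  assumes "B \<in> S3 n"
  shows "reflect n B \<in> S1 n"
proof -
  obtain t where t: "1 \<le> t" "t + 1 \<le> n"
    and low: "\<forall>i\<le>t. B i True False \<and> B i True True"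
    and high: "\<forall>i. t < i \<and> i < n \<longrightarrow> B i True False \<noteq> B i True True"
    and left: "\<forall>i<n. B i False False \<noteq> B i False True"
    and columns: "\<exists>i<n. \<exists>j<n. B i False False \<and> B j False True"
    using assms by (auto simp: S3_def)
  show ?thesis unfolding S1_def
  proof (intro CollectI conjI, simp add: arrays_def reflect_def,
      rule exI[of _ "n - 1 - t"], intro conjI allI impI)
    show "n - 1 - t + 2 \<le> n" using t by simp
  next
    fix i assume "n - 1 - t \<le> i \<and> i < n"
    then have "n - 1 - i \<le> t" "i < n" by auto
    then show "reflect n B i False False" "reflect n B i False True"
      using low by (simp_all add: reflect_def)
  next
    fix i assume "i < n - 1 - t"
    then have "t < n - 1 - i \<and> n - 1 - i < n" "i < n" by auto
    then show "reflect n B i False False \<noteq> reflect n B i False True"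
      using high by (simp add: reflect_def)
  next
    fix i assume "i < n"
    then show "reflect n B i True False \<noteq> reflect n B i True True"
      using left[rule_format, of "n - 1 - i"] by (simp add: reflect_def)
  next
    obtain i j where "i < n" "j < n" "B i False False" "B j False True" using columns by blast
    moreover from this have "n - 1 - (n - 1 - i) = i" "n - 1 - (n - 1 - j) = j" by simp_all
    ultimately show "\<exists>i<n. \<exists>j<n. reflect n B i True False \<and> reflect n B j True True"
      by (intro exI[of _ "n - 1 - i"] conjI exI[of _ "n - 1 - j"]) (simp_all add: reflect_def)
  qed
qed

lemma card_S3: "card (S3 n) = card (S1 n)"
proof -
  have "bij_betw (reflect n) (S1 n) (S3 n)"
  proof (rule bij_betw_byWitness[where f' = "reflect n"])
    show "\<forall>B\<in>S1 n. reflect n (reflect n B) = B" "\<forall>B\<in>S3 n. reflect n (reflect n B) = B"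
      using reflect_reflect Ssig_parts_subset_arrays by blast+
    show "reflect n ` S1 n \<subseteq> S3 n" "reflect n ` S3 n \<subseteq> S1 n"
      using reflect_S1 reflect_S3 by blast+
  qed
  then show ?thesis by (simp add: bij_betw_same_card)
qed

lemma Ssig_parts_disjoint:
  assumes "0 < n"
  shows "S1 n \<inter> S2 n = {}" "(S1 n \<union> S2 n) \<inter> S3 n = {}"
proof -
  have S1: "2 \<le> n \<and> B (n - 2) False False \<and> B (n - 2) False True \<and>
      B (n - 1) False False \<and> B (n - 1) False True" if "B \<in> S1 n" for B
    using that by (auto simp: S1_def)
  have S2: "B (n - 1) False False \<and> B (n - 1) False True \<and>
      (2 \<le> n \<longrightarrow> B (n - 2) False False \<noteq> B (n - 2) False True)" if "B \<in> S2 n" for B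
    using that by (simp add: S2_def)
  have S3: "B (n - 1) False False \<noteq> B (n - 1) False True" if "B \<in> S3 n" for B
  proof -
    have "\<forall>i<n. B i False False \<noteq> B i False True"
      using that unfolding S3_def mem_Collect_eq by (elim conjE exE)
    then show ?thesis using assms by simp
  qed
  show "S1 n \<inter> S2 n = {}"
  proof (intro equals0I)
    fix B assume "B \<in> S1 n \<inter> S2 n"
    then show False using S1[of B] S2[of B] by simp
  qed
  show "(S1 n \<union> S2 n) \<inter> S3 n = {}"
  proof (intro equals0I)
    fix B assume B: "B \<in> (S1 n \<union> S2 n) \<inter> S3 n"
    then have "B (n - 1) False False \<and> B (n - 1) False True"
      using S1[of B] S2[of B] by (cases "B \<in> S1 n") simp_all
    then show False using S3[of B] B by simp
  qed
qed

lemma Ssig_count_arith: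
  "int (2 * ((2 ^ k - 1) * (2 ^ Suc k - 2)) + 2 ^ k * 2 ^ k) = 5 * 4 ^ k - 2 ^ (Suc k + 2) + 4"
proof -
  have "1 \<le> (2::nat) ^ k" by simp
  then have "int (2 * ((2 ^ k - 1) * (2 ^ Suc k - 2)) + 2 ^ k * 2 ^ k) =
      2 * ((2 ^ k - 1) * (2 * 2 ^ k - 2)) + 2 ^ k * (2 ^ k :: int)"
    by (simp add: of_nat_diff)
  also have "\<dots> = 5 * (2 ^ k * 2 ^ k) - 8 * 2 ^ k + 4"
    by (simp add: algebra_simps)
  also have "(2 ^ k * 2 ^ k :: int) = 4 ^ k"
    by (simp flip: power_mult_distrib)
  also have "8 * 2 ^ k = (2 ^ (Suc k + 2) :: int)"
    by simp
  finally show ?thesis .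
qed

lemma card_Ssig:
  assumes "0 < n"
  shows "int (card (Ssig n)) = 5 * 4 ^ (n - 1) - 2 ^ (n + 2) + 4"
proof -
  have finite: "finite (S1 n)" "finite (S2 n)" "finite (S3 n)"
    by (rule finite_subset[OF Ssig_parts_subset_arrays(1) finite_arrays],
        rule finite_subset[OF Ssig_parts_subset_arrays(2) finite_arrays],
        rule finite_subset[OF Ssig_parts_subset_arrays(3) finite_arrays])
  have "card (Ssig n) = card (S1 n) + card (S2 n) + card (S3 n)"
    unfolding Ssig_def using finite Ssig_parts_disjoint[OF assms]
    by (simp add: card_Un_disjoint)
  also have "\<dots> = 2 * ((2 ^ (n - 1) - 1) * (2 ^ n - 2)) + 2 ^ (n - 1) * 2 ^ (n - 1)"
    unfolding card_S3 card_S1[OF assms] card_S2[OF assms] by linarith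
  finally have card:
    "card (Ssig n) = 2 * ((2 ^ (n - 1) - 1) * (2 ^ n - 2)) + 2 ^ (n - 1) * 2 ^ (n - 1)" .
  obtain k where n: "n = Suc k" using assms by (cases n) auto
  show ?thesis unfolding card unfolding n diff_Suc_1 by (rule Ssig_count_arith)
qed

theorem corollary1:
  fixes n :: nat and \<gamma> :: "nat \<Rightarrow> real"
  assumes "1 \<le> n"
    and "\<And>i j. i < j \<Longrightarrow> j < n \<Longrightarrow> \<gamma> i < \<gamma> j"
  shows "int (card (Mvec n ` {v. is_vertex n \<gamma> v})) = 5 * 4 ^ (n - 1) - 2 ^ (n + 2) + 4
    \<and> int (card (Ssig n)) = 5 * 4 ^ (n - 1) - 2 ^ (n + 2) + 4"
proof -
  interpret ordered_levels n \<gamma>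
    using assms by unfold_locales auto
  have "int (card (Ssig n)) = 5 * 4 ^ (n - 1) - 2 ^ (n + 2) + 4"
    using n_pos by (rule card_Ssig)
  then show ?thesis by (simp add: card_vertex_classes)
qed

end
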